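(* Assume one of (H1), (H2), (H3) holds, with the corresponding $\ell$, and let $(\lambda_n,U^n)$ be as in the setting. Then for every $\mathsf h\in C^1([0,L])$ with $\mathsf h(0)=\mathsf h(L)=0$, $$\int_0^L\mathsf h'\Big(\rho_1|\lambda_nv^{1,n}|^2+k_1|v^{1,n}_x|^2+\rho_2|\lambda_nv^{3,n}|^2+k_2|v^{3,n}_x|^2+\rho_1|\lambda_nv^{5,n}|^2+k_3|v^{5,n}_x|^2\Big)dx\longrightarrow0 .$$
   Context: Let $\rho_1,\rho_2,k_1,k_2,k_3,l,L>0$, $0<\beta<L$, $a_0>0$, $a=a_0$ on $(0,\beta)$, $a=0$ on $(\beta,L)$. Let $\mathcal H=(H^1_0(0,L)\times L^2(0,L))^3$ with inner product $(U,\tilde U)_{\mathcal H}=\int_0^L\big(k_1(v^1_x+v^3+lv^5)\overline{(\tilde v^1_x+\tilde v^3+l\tilde v^5)}+\rho_1v^2\overline{\tilde v^2}+k_2v^3_x\overline{\tilde v^3_x}+\rho_2v^4\overline{\tilde v^4}+k_3(v^5_x-lv^1)\overline{(\tilde v^5_x-l\tilde v^1)}+\rho_1v^6\overline{\tilde v^6}\big)dx$, $D(\mathcal A)=[(H^2\cap H^1_0)(0,L)\times H^1_0(0,L)]^3$, and $\mathcal A(v^1,\dots,v^6)=\big(v^2,\frac{k_1}{\rho_1}(v^1_x+v^3+lv^5)_x+\frac{lk_3}{\rho_1}(v^5_x-lv^1),v^4,\frac{k_2}{\rho_2}v^3_{xx}-\frac{k_1}{\rho_2}(v^1_x+v^3+lv^5),v^6,\frac{k_3}{\rho_1}(v^5_x-lv^1)_x-\frac{lk_1}{\rho_1}(v^1_x+v^3+lv^5)-\frac{a}{\rho_1}v^6\big)$.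 Hypotheses: (H1) $k_1/\rho_1=k_2/\rho_2$, $k_1=k_3$, $\ell=0$; (H2) $k_1/\rho_1=k_2/\rho_2$, $k_1\ne k_3$, $\ell=2$; (H3) $k_1/\rho_1\ne k_2/\rho_2$, $\ell=4$. Setting: $(\lambda_n)\subset\mathbb R\setminus\{0\}$ with $|\lambda_n|\to\infty$, $U^n=(v^{1,n},\dots,v^{6,n})\in D(\mathcal A)$ with $\|U^n\|_{\mathcal H}=1$, and $F^n:=\lambda_n^{\ell}(i\lambda_nI-\mathcal A)U^n\to0$ in $\mathcal H$. *)

theory Defs
  imports "HOL-Analysis.Analysis"
begin

definition L2 :: "real \<Rightarrow> (real \<Rightarrow> complex) \<Rightarrow> bool" where
  "L2 L g \<longleftrightarrow> set_borel_measurable lborel {0..L} g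
      \<and> set_integrable lborel {0..L} (\<lambda>x. (cmod (g x))\<^sup>2)"

text \<open>g (in L^2(0,L)) is the weak derivative of v on [0,L]; equivalently v is the
  absolutely continuous function v(x) = v(0) + int_0^x g, i.e. v in H^1(0,L) with v_x = g.\<close>
definition is_wderiv :: "real \<Rightarrow> (real \<Rightarrow> complex) \<Rightarrow> (real \<Rightarrow> complex) \<Rightarrow> bool" where
  "is_wderiv L v g \<longleftrightarrow> L2 L g
      \<and> (\<forall>x\<in>{0..L}. v x = v 0 + (LINT t:{0..x}|lborel. g t))"

definition H10 :: "real \<Rightarrow> (real \<Rightarrow> complex) \<Rightarrow> (real \<Rightarrow> complex) \<Rightarrow> bool" where
  "H10 L v g \<longleftrightarrow> is_wderiv L v g \<and> v 0 = 0 \<and> v L = 0"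

definition H2H10 :: "real \<Rightarrow> (real \<Rightarrow> complex) \<Rightarrow> (real \<Rightarrow> complex) \<Rightarrow> (real \<Rightarrow> complex) \<Rightarrow> bool" where
  "H2H10 L v g gg \<longleftrightarrow> H10 L v g \<and> is_wderiv L g gg"

text \<open>The norm of the energy space H, for a state (u1,...,u6) where u1x, u3x, u5x are
  the weak derivatives of u1, u3, u5.\<close>
definition Hnorm ::
  "real \<Rightarrow> real \<Rightarrow> real \<Rightarrow> real \<Rightarrow> real \<Rightarrow> real \<Rightarrow> real \<Rightarrow>
   (real \<Rightarrow> complex) \<Rightarrow> (real \<Rightarrow> complex) \<Rightarrow> (real \<Rightarrow> complex) \<Rightarrow>
   (real \<Rightarrow> complex) \<Rightarrow> (real \<Rightarrow> complex) \<Rightarrow> (real \<Rightarrow> complex) \<Rightarrow>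
   (real \<Rightarrow> complex) \<Rightarrow> (real \<Rightarrow> complex) \<Rightarrow> (real \<Rightarrow> complex) \<Rightarrow> real" where
  "Hnorm rho1 rho2 k1 k2 k3 l L u1 u1x u2 u3 u3x u4 u5 u5x u6 =
     sqrt (LINT x:{0..L}|lborel.
        k1 * (cmod (u1x x + u3 x + of_real l * u5 x))\<^sup>2 + rho1 * (cmod (u2 x))\<^sup>2
      + k2 * (cmod (u3x x))\<^sup>2 + rho2 * (cmod (u4 x))\<^sup>2
      + k3 * (cmod (u5x x - of_real l * u1 x))\<^sup>2 + rho1 * (cmod (u6 x))\<^sup>2)"

end

theory Submission
  imports Defs
begin

text \<open>Write \<open>F\<^sup>n = (i \<lambda>\<^sub>n - A) U\<^sup>n\<close>. Since \<open>|\<lambda>\<^sub>n| \<rightarrow> \<infinity>\<close>, the hypothesis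
  \<open>\<lambda>\<^sub>n\<^sup>\<ell> F\<^sup>n \<rightarrow> 0\<close> already gives \<open>F\<^sup>n \<rightarrow> 0\<close>; by a Poincare-type coercivity
  estimate every component of \<open>F\<^sup>n\<close> then tends to \<open>0\<close> in \<open>L\<^sup>2\<close> while every component of
  \<open>U\<^sup>n\<close> stays bounded. Dividing the first, third and
  fifth equations by \<open>\<lambda>\<^sub>n\<close> gives \<open>v\<^sup>1, v\<^sup>3, v\<^sup>5 \<rightarrow> 0\<close>, and the real part of \<open>(F\<^sup>n, U\<^sup>n)\<close> is
  the dissipation \<open>\<integral> a |v\<^sup>6|\<^sup>2\<close>, which therefore tends to \<open>0\<close>.

  Multiplying the second, fourth and sixth equations by \<open>2 h v\<^sup>1\<^sub>x, 2 h v\<^sup>3\<^sub>x, 2 h v\<^sup>5\<^sub>x\<close> writes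
  \<open>h'\<close> times the energy density as an exact derivative, whose integral vanishes because
  \<open>h(0) = h(L) = 0\<close>, plus terms \<open>b P cnj Q\<close> with \<open>b\<close> continuous, \<open>P\<close> one of the quantities
  shown to tend to \<open>0\<close> and \<open>Q\<close> bounded in \<open>L\<^sup>2\<close>; by Cauchy-Schwarz these vanish in the limit.\<close>

section \<open>Square integrable functions on \<open>[0, L]\<close>\<close>

lemma two_mult_le_weighted_squares:
  fixes a b t :: real assumes "t > 0"
  shows "2 * (a * b) \<le> t * a\<^sup>2 + b\<^sup>2 / t"
proof -
  have "0 \<le> (t * a - b)\<^sup>2 / t" using assms by simp
  also have "\<dots> = t * a\<^sup>2 + b\<^sup>2 / t - 2 * (a * b)"
    using assms by (simp add: field_simps power2_eq_square)
  finally show ?thesis by simp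
qed

lemma cmod_add_power2_le: "(cmod (z + w))\<^sup>2 \<le> 2 * (cmod z)\<^sup>2 + 2 * (cmod w)\<^sup>2"
proof -
  have "(cmod (z + w))\<^sup>2 \<le> (cmod z + cmod w)\<^sup>2"
    by (simp add: norm_triangle_ineq power_mono)
  also have "\<dots> \<le> 2 * (cmod z)\<^sup>2 + 2 * (cmod w)\<^sup>2"
    using two_mult_le_weighted_squares[of 1 "cmod z" "cmod w"] by (simp add: power2_sum)
  finally show ?thesis .
qed

lemma set_borel_measurable_iff_restrict_space:
  fixes f :: "real \<Rightarrow> 'a::real_normed_vector"
  shows "set_borel_measurable lborel {a..b} f \<longleftrightarrow> f \<in> borel_measurable (restrict_space lborel {a..b})"
  unfolding set_borel_measurable_def by (simp add: borel_measurable_restrict_space_iff)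

lemma set_integrable_Re:
  "set_integrable M A f \<Longrightarrow> set_integrable M A (\<lambda>x. Re (f x))"
  unfolding set_integrable_def by (drule integrable_Re) simp

lemma set_integral_Re:
  "set_integrable M A f \<Longrightarrow> (LINT x:A|M. Re (f x)) = Re (LINT x:A|M. f x)"
  unfolding set_integrable_def set_lebesgue_integral_def by (drule integral_Re) simp

lemma set_integral_cnj:
  "(LINT x:A|M. cnj (f x)) = cnj (LINT x:A|M. f x)"
proof -
  have "(\<lambda>x. indicator A x *\<^sub>R cnj (f x)) = (\<lambda>x. cnj (indicator A x *\<^sub>R f x))"
    by (simp add: fun_eq_iff)
  then show ?thesis
    unfolding set_lebesgue_integral_def by (simp only: Bochner_Integration.integral_cnj)
qed

lemma set_integral_norm_le:
  fixes f :: "'a \<Rightarrow> 'b::{banach, second_countable_topology}"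
  shows "norm (LINT x:A|M. f x) \<le> (LINT x:A|M. norm (f x))"
  unfolding set_lebesgue_integral_def
  using integral_norm_bound[of M "\<lambda>x. indicator A x *\<^sub>R f x"] by (simp add: abs_mult)

lemma L2_measurable: "L2 L p \<Longrightarrow> p \<in> borel_measurable (restrict_space lborel {0..L})"
  unfolding L2_def set_borel_measurable_iff_restrict_space by simp

lemma L2_integrable_square: "L2 L p \<Longrightarrow> set_integrable lborel {0..L} (\<lambda>x. (cmod (p x))\<^sup>2)"
  unfolding L2_def by simp

lemma L2I:
  assumes "p \<in> borel_measurable (restrict_space lborel {0..L})"
    and "AE x in lborel. x \<in> {0..L} \<longrightarrow> (cmod (p x))\<^sup>2 \<le> g x"
    and "set_integrable lborel {0..L} g"
  shows "L2 L p"
  unfolding L2_def set_borel_measurable_iff_restrict_space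
proof
  show "p \<in> borel_measurable (restrict_space lborel {0..L})" by fact
  show "set_integrable lborel {0..L} (\<lambda>x. (cmod (p x))\<^sup>2)"
    by (rule set_integrable_bound[OF assms(3)])
       (use assms(1,2) in \<open>auto simp: set_borel_measurable_iff_restrict_space elim!: eventually_mono\<close>)
qed

lemma L2_integrable_mult:
  assumes "L2 L p" "L2 L q"
  shows "set_integrable lborel {0..L} (\<lambda>x. p x * q x)"
proof (rule set_integrable_bound)
  show "set_integrable lborel {0..L} (\<lambda>x. (cmod (p x))\<^sup>2 + (cmod (q x))\<^sup>2)"
    using assms by (intro set_integral_add L2_integrable_square)
  show "set_borel_measurable lborel {0..L} (\<lambda>x. p x * q x)"
    using L2_measurable[OF assms(1)] L2_measurable[OF assms(2)]
    unfolding set_borel_measurable_iff_restrict_space by measurable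
  have "cmod (p x) * cmod (q x) \<le> (cmod (p x))\<^sup>2 + (cmod (q x))\<^sup>2" for x
    using two_mult_le_weighted_squares[of 1 "cmod (p x)" "cmod (q x)"]
      mult_nonneg_nonneg[OF norm_ge_zero norm_ge_zero, of "p x" "q x"] by linarith
  then show "AE x in lborel. x \<in> {0..L} \<longrightarrow> norm (p x * q x) \<le> norm ((cmod (p x))\<^sup>2 + (cmod (q x))\<^sup>2)"
    by (simp add: norm_mult)
qed

lemma L2_integrable:
  assumes "L2 L p" shows "set_integrable lborel {0..L} p"
proof -
  have "L2 L (\<lambda>x. 1)"
    by (rule L2I[where g="\<lambda>x. 1"]) (auto intro: borel_integrable_atLeastAtMost')
  with L2_integrable_mult[OF assms this] show ?thesis by simp
qed

lemma L2_bounded_mult: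
  assumes p: "L2 L p" and b: "b \<in> borel_measurable (restrict_space lborel {0..L})"
    and B: "AE x in lborel. x \<in> {0..L} \<longrightarrow> cmod (b x) \<le> B"
  shows "L2 L (\<lambda>x. b x * p x)"
proof (rule L2I)
  show "(\<lambda>x. b x * p x) \<in> borel_measurable (restrict_space lborel {0..L})"
    using b L2_measurable[OF p] by measurable
  show "set_integrable lborel {0..L} (\<lambda>x. B\<^sup>2 * (cmod (p x))\<^sup>2)"
    using L2_integrable_square[OF p] by auto
  show "AE x in lborel. x \<in> {0..L} \<longrightarrow> (cmod (b x * p x))\<^sup>2 \<le> B\<^sup>2 * (cmod (p x))\<^sup>2"
    using B
  proof eventually_elim
    case (elim x)
    show ?case
    proof
      assume "x \<in> {0..L}"
      then have "cmod (b x) * cmod (p x) \<le> B * cmod (p x)"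
        using elim by (simp add: mult_right_mono)
      then show "(cmod (b x * p x))\<^sup>2 \<le> B\<^sup>2 * (cmod (p x))\<^sup>2"
        by (simp add: norm_mult power_mono flip: power_mult_distrib)
    qed
  qed
qed

lemma L2_cmult: "L2 L p \<Longrightarrow> L2 L (\<lambda>x. c * p x)"
  by (rule L2_bounded_mult[where B="cmod c"]) auto

lemma L2_cnj: "L2 L p \<Longrightarrow> L2 L (\<lambda>x. cnj (p x))"
  unfolding L2_def set_borel_measurable_iff_restrict_space
  by (auto intro: borel_measurable_continuous_on[where f=cnj] continuous_intros)

lemma L2_add:
  assumes "L2 L p" "L2 L q" shows "L2 L (\<lambda>x. p x + q x)"
proof (rule L2I)
  show "(\<lambda>x. p x + q x) \<in> borel_measurable (restrict_space lborel {0..L})"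
    using L2_measurable[OF assms(1)] L2_measurable[OF assms(2)] by measurable
  show "set_integrable lborel {0..L} (\<lambda>x. 2 * (cmod (p x))\<^sup>2 + 2 * (cmod (q x))\<^sup>2)"
    using L2_integrable_square[OF assms(1)] L2_integrable_square[OF assms(2)] by auto
  show "AE x in lborel. x \<in> {0..L} \<longrightarrow> (cmod (p x + q x))\<^sup>2 \<le> 2 * (cmod (p x))\<^sup>2 + 2 * (cmod (q x))\<^sup>2"
    by (simp add: cmod_add_power2_le)
qed

lemma L2_diff: "L2 L p \<Longrightarrow> L2 L q \<Longrightarrow> L2 L (\<lambda>x. p x - q x)"
  using L2_add[of L p "\<lambda>x. - q x"] L2_cmult[of L q "-1"] by simp

lemma L2_continuous:
  assumes "continuous_on {0..L} p" shows "L2 L p"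
proof (rule L2I)
  show "p \<in> borel_measurable (restrict_space lborel {0..L})"
    using set_measurable_continuous_on[OF _ assms]
    unfolding set_borel_measurable_iff_restrict_space[symmetric] set_borel_measurable_def by simp
  show "set_integrable lborel {0..L} (\<lambda>x. (cmod (p x))\<^sup>2)"
    using assms by (intro borel_integrable_atLeastAtMost') (auto intro: continuous_intros)
qed simp

definition sqnorm :: "real \<Rightarrow> (real \<Rightarrow> complex) \<Rightarrow> real" where
  "sqnorm L p = (LINT x:{0..L}|lborel. (cmod (p x))\<^sup>2)"

lemma sqnorm_nonneg: "0 \<le> sqnorm L p"
  unfolding sqnorm_def set_lebesgue_integral_def
  by (intro integral_nonneg_AE) (auto simp: indicator_def)

lemma sqnorm_cmult: "sqnorm L (\<lambda>x. c * p x) = (cmod c)\<^sup>2 * sqnorm L p"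
  unfolding sqnorm_def by (simp add: norm_mult power_mult_distrib)

lemma sqnorm_add_le:
  assumes "L2 L p" "L2 L q"
  shows "sqnorm L (\<lambda>x. p x + q x) \<le> 2 * sqnorm L p + 2 * sqnorm L q"
proof -
  have "sqnorm L (\<lambda>x. p x + q x) \<le> (LINT x:{0..L}|lborel. 2 * (cmod (p x))\<^sup>2 + 2 * (cmod (q x))\<^sup>2)"
    unfolding sqnorm_def
  proof (rule set_integral_mono)
    show "set_integrable lborel {0..L} (\<lambda>x. (cmod (p x + q x))\<^sup>2)"
      using assms by (intro L2_integrable_square L2_add)
    show "set_integrable lborel {0..L} (\<lambda>x. 2 * (cmod (p x))\<^sup>2 + 2 * (cmod (q x))\<^sup>2)"
      using L2_integrable_square[OF assms(1)] L2_integrable_square[OF assms(2)] by auto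
  qed (rule cmod_add_power2_le)
  also have "\<dots> = 2 * sqnorm L p + 2 * sqnorm L q"
    unfolding sqnorm_def using L2_integrable_square[OF assms(1)] L2_integrable_square[OF assms(2)] by simp
  finally show ?thesis .
qed

lemma quadratic_nonneg_imp_le_sqrt_mult:
  fixes P I Q :: real
  assumes q: "\<And>t. 0 \<le> t\<^sup>2 * P - 2 * t * I + Q" and P: "0 \<le> P" and Q: "0 \<le> Q"
  shows "I \<le> sqrt P * sqrt Q"
proof (cases "P = 0")
  case True
  show ?thesis
  proof (rule ccontr)
    assume "\<not> ?thesis"
    then have "I > 0" using True by simp
    have "0 \<le> ((Q + 1) / (2 * I))\<^sup>2 * P - 2 * ((Q + 1) / (2 * I)) * I + Q" by (rule q)
    with True \<open>I > 0\<close> show False by (simp add: field_simps)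
  qed
next
  case False
  then have "P > 0" using P by simp
  have "0 \<le> (I / P)\<^sup>2 * P - 2 * (I / P) * I + Q" by (rule q)
  also have "\<dots> = Q - I\<^sup>2 / P"
    using \<open>P > 0\<close> by (simp add: field_simps power2_eq_square)
  finally have "I\<^sup>2 \<le> P * Q" using \<open>P > 0\<close> by (simp add: field_simps)
  then show ?thesis
    by (metis real_sqrt_abs real_sqrt_le_mono real_sqrt_mult abs_ge_self order_trans)
qed

lemma integral_norm_mult_le_sqnorm:
  assumes p: "L2 L p" and q: "L2 L q"
  shows "(LINT x:{0..L}|lborel. cmod (p x) * cmod (q x)) \<le> sqrt (sqnorm L p) * sqrt (sqnorm L q)"
proof (rule quadratic_nonneg_imp_le_sqrt_mult[OF _ sqnorm_nonneg sqnorm_nonneg])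
  fix t :: real
  have pq: "set_integrable lborel {0..L} (\<lambda>x. cmod (p x) * cmod (q x))"
    using set_integrable_norm[OF L2_integrable_mult[OF p q]] by (simp add: norm_mult)
  have "0 \<le> (LINT x:{0..L}|lborel. (t * cmod (p x) - cmod (q x))\<^sup>2)"
    unfolding set_lebesgue_integral_def by (intro integral_nonneg_AE) auto
  also have "\<dots> = (LINT x:{0..L}|lborel.
      t\<^sup>2 * (cmod (p x))\<^sup>2 - 2 * t * (cmod (p x) * cmod (q x)) + (cmod (q x))\<^sup>2)"
    by (simp add: power2_eq_square algebra_simps)
  also have "\<dots> = t\<^sup>2 * sqnorm L p - 2 * t * (LINT x:{0..L}|lborel. cmod (p x) * cmod (q x)) + sqnorm L q"
    using L2_integrable_square[OF p] L2_integrable_square[OF q] pq unfolding sqnorm_def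
    by (simp add: set_integral_add set_integral_diff)
  finally show "0 \<le> t\<^sup>2 * sqnorm L p - 2 * t * (LINT x:{0..L}|lborel. cmod (p x) * cmod (q x)) + sqnorm L q" .
qed

definition null_integrals :: "real \<Rightarrow> (nat \<Rightarrow> real \<Rightarrow> 'a::{banach, second_countable_topology}) \<Rightarrow> bool" where
  "null_integrals L f \<longleftrightarrow> (\<forall>n. set_integrable lborel {0..L} (f n))
     \<and> (\<lambda>n. LINT x:{0..L}|lborel. f n x) \<longlonglongrightarrow> 0"

lemma null_integrals_tendsto_0:
  "null_integrals L f \<Longrightarrow> (\<lambda>n. LINT x:{0..L}|lborel. f n x) \<longlonglongrightarrow> 0"
  unfolding null_integrals_def by blast

lemma null_integralsI_zero:
  assumes "\<And>n. set_integrable lborel {0..L} (f n)" "\<And>n. (LINT x:{0..L}|lborel. f n x) = 0"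
  shows "null_integrals L f"
  using assms unfolding null_integrals_def by simp

lemma null_integrals_add:
  assumes "null_integrals L f" "null_integrals L g"
  shows "null_integrals L (\<lambda>n x. f n x + g n x)"
  using assms tendsto_add[of "\<lambda>n. LINT x:{0..L}|lborel. f n x" 0 _ "\<lambda>n. LINT x:{0..L}|lborel. g n x" 0]
  unfolding null_integrals_def by (simp add: set_integral_add)

lemma null_integrals_mult_left:
  fixes f :: "nat \<Rightarrow> real \<Rightarrow> real"
  assumes "null_integrals L f"
  shows "null_integrals L (\<lambda>n x. c * f n x)"
  using assms tendsto_mult_right_zero[of "\<lambda>n. LINT x:{0..L}|lborel. f n x" _ c]
  unfolding null_integrals_def by simp

lemma null_integrals_Re:
  assumes "null_integrals L f"
  shows "null_integrals L (\<lambda>n x. Re (f n x))"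
  using assms tendsto_Re[of "\<lambda>n. LINT x:{0..L}|lborel. f n x" 0]
  unfolding null_integrals_def by (simp add: set_integrable_Re set_integral_Re)

lemma continuous_on_Icc_bounded:
  fixes b :: "real \<Rightarrow> 'a::real_normed_vector"
  assumes "continuous_on {0..L} b"
  obtains B where "B > 0" "\<And>x. x \<in> {0..L} \<Longrightarrow> norm (b x) \<le> B"
  using compact_imp_bounded[OF compact_continuous_image[OF assms compact_Icc]]
  unfolding bounded_pos by auto

lemma integral_norm_mult_tendsto_0:
  assumes P: "\<And>n. L2 L (P n)" and Q: "\<And>n. L2 L (Q n)"
    and P0: "(\<lambda>n. sqnorm L (P n)) \<longlonglongrightarrow> 0" and Qb: "Bseq (\<lambda>n. sqnorm L (Q n))"
  shows "(\<lambda>n. LINT x:{0..L}|lborel. cmod (P n x) * cmod (Q n x)) \<longlonglongrightarrow> 0"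
proof -
  obtain K where K: "\<And>n. sqnorm L (Q n) \<le> K"
    using Qb unfolding Bseq_def by (metis abs_le_D1 real_norm_def)
  have "(\<lambda>n. sqrt (sqnorm L (P n)) * sqrt K) \<longlonglongrightarrow> sqrt 0 * sqrt K"
    by (intro tendsto_intros P0)
  then have up: "(\<lambda>n. sqrt (sqnorm L (P n)) * sqrt K) \<longlonglongrightarrow> 0" by simp
  show ?thesis
  proof (rule tendsto_sandwich[OF _ _ tendsto_const up]; intro always_eventually allI)
    fix n
    show "0 \<le> (LINT x:{0..L}|lborel. cmod (P n x) * cmod (Q n x))"
      unfolding set_lebesgue_integral_def by (intro integral_nonneg_AE) auto
    have "sqrt (sqnorm L (P n)) * sqrt (sqnorm L (Q n)) \<le> sqrt (sqnorm L (P n)) * sqrt K"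
      using K[of n] by (intro mult_left_mono) (auto simp: sqnorm_nonneg)
    then show "(LINT x:{0..L}|lborel. cmod (P n x) * cmod (Q n x)) \<le> sqrt (sqnorm L (P n)) * sqrt K"
      using integral_norm_mult_le_sqnorm[OF P Q] by (meson order_trans)
  qed
qed

lemma null_integrals_weighted_inner:
  assumes b: "continuous_on {0..L} b"
    and P: "\<And>n. L2 L (P n)" and Q: "\<And>n. L2 L (Q n)"
    and P0: "(\<lambda>n. sqnorm L (P n)) \<longlonglongrightarrow> 0" and Qb: "Bseq (\<lambda>n. sqnorm L (Q n))"
  shows "null_integrals L (\<lambda>n x. b x * P n x * cnj (Q n x))"
  unfolding null_integrals_def
proof
  obtain B where B: "B > 0" "\<And>x. x \<in> {0..L} \<Longrightarrow> cmod (b x) \<le> B"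
    using continuous_on_Icc_bounded[OF b] by blast
  have bP: "L2 L (\<lambda>x. b x * P n x)" for n
    by (rule L2_bounded_mult[OF P L2_measurable[OF L2_continuous[OF b]], of B]) (simp add: B)
  show int: "\<forall>n. set_integrable lborel {0..L} (\<lambda>x. b x * P n x * cnj (Q n x))"
    using L2_integrable_mult[OF bP L2_cnj[OF Q]] by blast
  have le: "norm (LINT x:{0..L}|lborel. b x * P n x * cnj (Q n x))
      \<le> B * (LINT x:{0..L}|lborel. cmod (P n x) * cmod (Q n x))" for n
  proof -
    have pq: "set_integrable lborel {0..L} (\<lambda>x. cmod (P n x) * cmod (Q n x))"
      using set_integrable_norm[OF L2_integrable_mult[OF P Q]] by (simp add: norm_mult)
    have "norm (LINT x:{0..L}|lborel. b x * P n x * cnj (Q n x))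
        \<le> (LINT x:{0..L}|lborel. norm (b x * P n x * cnj (Q n x)))"
      using int by (intro set_integral_norm_le)
    also have "\<dots> \<le> (LINT x:{0..L}|lborel. B * (cmod (P n x) * cmod (Q n x)))"
      using int pq B
      by (intro set_integral_mono set_integrable_norm)
         (auto simp: norm_mult mult.assoc intro!: mult_right_mono)
    finally show ?thesis by simp
  qed
  show "(\<lambda>n. LINT x:{0..L}|lborel. b x * P n x * cnj (Q n x)) \<longlonglongrightarrow> 0"
    by (rule Lim_null_comparison[OF always_eventually[OF allI[OF le]]
          tendsto_mult_right_zero[OF integral_norm_mult_tendsto_0[OF P Q P0 Qb]]])
qed

section \<open>Weak derivatives\<close>

lemma integrable_pair_mult:
  fixes u w :: "real \<Rightarrow> complex"
  assumes u: "integrable lborel u" and w: "integrable lborel w"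
  shows "integrable (lborel \<Otimes>\<^sub>M lborel) (\<lambda>(x, t). u x * w t)"
proof (rule lborel_pair.Fubini_integrable)
  have [measurable]: "u \<in> borel_measurable lborel" "w \<in> borel_measurable lborel"
    using u w by (simp_all add: borel_measurable_integrable)
  show "(\<lambda>(x, t). u x * w t) \<in> borel_measurable (lborel \<Otimes>\<^sub>M lborel)" by measurable
  show "integrable lborel (\<lambda>x. \<integral>t. norm ((\<lambda>(x, t). u x * w t) (x, t)) \<partial>lborel)"
    using u by (simp add: norm_mult)
  show "AE x in lborel. integrable lborel (\<lambda>t. (\<lambda>(x, t). u x * w t) (x, t))"
    using w by simp
qed

lemma integral_mult_split_triangle:
  fixes u w :: "real \<Rightarrow> complex"
  assumes u: "integrable lborel u" and w: "integrable lborel w"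
  shows "(\<integral>x. u x * (\<integral>t. indicator {..x} t *\<^sub>R w t \<partial>lborel) \<partial>lborel)
       + (\<integral>t. (\<integral>x. indicator {..<t} x *\<^sub>R u x \<partial>lborel) * w t \<partial>lborel)
       = (\<integral>x. u x \<partial>lborel) * (\<integral>t. w t \<partial>lborel)"
proof -
  have [measurable]: "u \<in> borel_measurable lborel" "w \<in> borel_measurable lborel"
    using u w by (simp_all add: borel_measurable_integrable)
  define F where "F = (\<lambda>(x::real, t::real). u x * w t)"
  define G1 where "G1 = (\<lambda>(x::real, t::real). if t \<le> x then u x * w t else 0)"
  define G2 where "G2 = (\<lambda>(x::real, t::real). if x < t then u x * w t else 0)"
  have [measurable]: "G1 \<in> borel_measurable (lborel \<Otimes>\<^sub>M lborel)" "G2 \<in> borel_measurable (lborel \<Otimes>\<^sub>M lborel)"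
    unfolding G1_def G2_def by measurable
  have F: "integrable (lborel \<Otimes>\<^sub>M lborel) F"
    unfolding F_def by (rule integrable_pair_mult[OF u w])
  have G1: "integrable (lborel \<Otimes>\<^sub>M lborel) G1" and G2: "integrable (lborel \<Otimes>\<^sub>M lborel) G2"
    by (auto intro!: Bochner_Integration.integrable_bound[OF F] simp: G1_def G2_def F_def)
  have "(\<integral>p. F p \<partial>(lborel \<Otimes>\<^sub>M lborel)) = (\<integral>p. G1 p \<partial>(lborel \<Otimes>\<^sub>M lborel)) + (\<integral>p. G2 p \<partial>(lborel \<Otimes>\<^sub>M lborel))"
  proof -
    have "F = (\<lambda>p. G1 p + G2 p)" by (auto simp: F_def G1_def G2_def fun_eq_iff)
    then show ?thesis using G1 G2 by simp
  qed
  also have "(\<integral>p. G1 p \<partial>(lborel \<Otimes>\<^sub>M lborel)) = (\<integral>x. u x * (\<integral>t. indicator {..x} t *\<^sub>R w t \<partial>lborel) \<partial>lborel)"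
  proof -
    have "(\<lambda>t. if t \<le> x then u x * w t else 0) = (\<lambda>t. u x * (indicator {..x} t *\<^sub>R w t))" for x
      by (auto simp: fun_eq_iff indicator_def)
    then have "(\<integral>t. (if t \<le> x then u x * w t else 0) \<partial>lborel)
        = u x * (\<integral>t. indicator {..x} t *\<^sub>R w t \<partial>lborel)" for x
      by (simp only: integral_mult_right_zero)
    then show ?thesis
      using lborel_pair.integral_fst'[OF G1] unfolding G1_def by (simp only: case_prod_conv)
  qed
  also have "(\<integral>p. G2 p \<partial>(lborel \<Otimes>\<^sub>M lborel)) = (\<integral>t. (\<integral>x. indicator {..<t} x *\<^sub>R u x \<partial>lborel) * w t \<partial>lborel)"
  proof -
    have "(\<lambda>x. if x < t then u x * w t else 0) = (\<lambda>x. (indicator {..<t} x *\<^sub>R u x) * w t)" for t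
      by (auto simp: fun_eq_iff indicator_def)
    then have "(\<integral>x. (if x < t then u x * w t else 0) \<partial>lborel)
        = (\<integral>x. indicator {..<t} x *\<^sub>R u x \<partial>lborel) * w t" for t
      by (simp only: integral_mult_left_zero)
    moreover have "integrable (lborel \<Otimes>\<^sub>M lborel) (\<lambda>(x, t). if x < t then u x * w t else 0)"
      using G2 unfolding G2_def .
    ultimately show ?thesis
      using lborel_pair.integral_snd[of "\<lambda>x t. if x < t then u x * w t else 0"] unfolding G2_def
      by simp
  qed
  finally show ?thesis
    using lborel_pair.integral_fst'[OF F] by (simp add: F_def)
qed

lemma set_integral_Icc_eq_Ico:
  fixes f :: "real \<Rightarrow> 'a::{banach, second_countable_topology}"
  assumes "set_integrable lborel {a..b} f"
  shows "(LINT x:{a..<b}|lborel. f x) = (LINT x:{a..b}|lborel. f x)"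
proof (rule set_integral_cong_set)
  have "set_integrable lborel {a..<b} f" by (rule set_integrable_subset[OF assms]) auto
  then show "set_borel_measurable lborel {a..b} f" "set_borel_measurable lborel {a..<b} f"
    using assms by (auto simp: set_integrable_def set_borel_measurable_def)
  show "AE x in lborel. (x \<in> {a..b}) = (x \<in> {a..<b})"
    using AE_lborel_singleton[of b] by eventually_elim auto
qed

lemma set_integral_mult_indefinite_integrals:
  fixes gu gw :: "real \<Rightarrow> complex"
  assumes iu: "set_integrable lborel {0..b} gu" and iw: "set_integrable lborel {0..b} gw"
  shows "(LINT x:{0..b}|lborel. gu x * (LINT t:{0..x}|lborel. gw t))
       + (LINT t:{0..b}|lborel. (LINT x:{0..t}|lborel. gu x) * gw t)
       = (LINT x:{0..b}|lborel. gu x) * (LINT t:{0..b}|lborel. gw t)"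
proof -
  define u where "u = (\<lambda>x. indicator {0..b} x *\<^sub>R gu x)"
  define w where "w = (\<lambda>x. indicator {0..b} x *\<^sub>R gw x)"
  have "(\<lambda>x. u x * (\<integral>t. indicator {..x} t *\<^sub>R w t \<partial>lborel))
      = (\<lambda>x. indicator {0..b} x *\<^sub>R (gu x * (LINT t:{0..x}|lborel. gw t)))"
  proof
    fix x
    have "indicator {..x} t *\<^sub>R w t = indicator {0..x} t *\<^sub>R gw t" if "x \<le> b" for t
      using that by (auto simp: w_def indicator_def)
    then show "u x * (\<integral>t. indicator {..x} t *\<^sub>R w t \<partial>lborel)
      = indicator {0..b} x *\<^sub>R (gu x * (LINT t:{0..x}|lborel. gw t))"
      by (auto simp: u_def indicator_def set_lebesgue_integral_def)
  qed
  moreover have "(\<lambda>t. (\<integral>x. indicator {..<t} x *\<^sub>R u x \<partial>lborel) * w t)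
      = (\<lambda>t. indicator {0..b} t *\<^sub>R ((LINT x:{0..t}|lborel. gu x) * gw t))"
  proof
    fix t
    have "indicator {..<t} x *\<^sub>R u x = indicator {0..<t} x *\<^sub>R gu x" if "t \<le> b" for x
      using that by (auto simp: u_def indicator_def)
    moreover have "(LINT x:{0..<t}|lborel. gu x) = (LINT x:{0..t}|lborel. gu x)" if "t \<le> b"
      using that by (intro set_integral_Icc_eq_Ico set_integrable_subset[OF iu]) auto
    ultimately show "(\<integral>x. indicator {..<t} x *\<^sub>R u x \<partial>lborel) * w t
      = indicator {0..b} t *\<^sub>R ((LINT x:{0..t}|lborel. gu x) * gw t)"
      by (auto simp: w_def indicator_def set_lebesgue_integral_def)
  qed
  moreover have "integrable lborel u" "integrable lborel w"
    using iu iw by (simp_all add: u_def w_def set_integrable_def)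
  ultimately show ?thesis
    using integral_mult_split_triangle[of u w] by (simp add: u_def w_def set_lebesgue_integral_def)
qed

lemma is_wderivI:
  assumes "L2 L g" "\<And>x. x \<in> {0..L} \<Longrightarrow> v x = v 0 + (LINT t:{0..x}|lborel. g t)"
  shows "is_wderiv L v g"
  using assms unfolding is_wderiv_def by blast

lemma is_wderiv_L2_deriv: "is_wderiv L v g \<Longrightarrow> L2 L g"
  unfolding is_wderiv_def by blast

lemma is_wderiv_eq: "is_wderiv L v g \<Longrightarrow> x \<in> {0..L} \<Longrightarrow> v x = v 0 + (LINT t:{0..x}|lborel. g t)"
  unfolding is_wderiv_def by blast

lemma is_wderiv_integrable:
  "is_wderiv L v g \<Longrightarrow> x \<in> {0..L} \<Longrightarrow> set_integrable lborel {0..x} g"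
  by (rule set_integrable_subset[OF L2_integrable[OF is_wderiv_L2_deriv]]) auto

lemma is_wderiv_continuous:
  assumes "is_wderiv L v g" shows "continuous_on {0..L} v"
proof -
  have "g integrable_on {0..L}"
    using set_borel_integral_eq_integral(1)[OF L2_integrable[OF is_wderiv_L2_deriv[OF assms]]] .
  then have "continuous_on {0..L} (\<lambda>x. v 0 + integral {0..x} g)"
    by (intro continuous_intros indefinite_integral_continuous_1)
  moreover have "v x = v 0 + integral {0..x} g" if "x \<in> {0..L}" for x
    using is_wderiv_eq[OF assms that]
      set_borel_integral_eq_integral(2)[OF is_wderiv_integrable[OF assms that]] by simp
  ultimately show ?thesis by (rule continuous_on_cong[THEN iffD2, OF refl, rotated])
qed

lemma is_wderiv_L2: "is_wderiv L v g \<Longrightarrow> L2 L v"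
  by (rule L2_continuous[OF is_wderiv_continuous])

lemma is_wderiv_add:
  assumes "is_wderiv L u gu" "is_wderiv L w gw"
  shows "is_wderiv L (\<lambda>x. u x + w x) (\<lambda>x. gu x + gw x)"
proof (rule is_wderivI)
  show "L2 L (\<lambda>x. gu x + gw x)" using assms by (intro L2_add is_wderiv_L2_deriv)
  fix x assume x: "x \<in> {0..L}"
  show "u x + w x = u 0 + w 0 + (LINT t:{0..x}|lborel. gu t + gw t)"
    using is_wderiv_eq[OF assms(1) x] is_wderiv_eq[OF assms(2) x]
      is_wderiv_integrable[OF assms(1) x] is_wderiv_integrable[OF assms(2) x] by simp
qed

lemma is_wderiv_cmult:
  assumes "is_wderiv L u gu"
  shows "is_wderiv L (\<lambda>x. c * u x) (\<lambda>x. c * gu x)"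
proof (rule is_wderivI)
  show "L2 L (\<lambda>x. c * gu x)" using assms by (intro L2_cmult is_wderiv_L2_deriv)
  show "c * u x = c * u 0 + (LINT t:{0..x}|lborel. c * gu t)" if "x \<in> {0..L}" for x
    using is_wderiv_eq[OF assms that] by (simp add: algebra_simps)
qed

lemma is_wderiv_diff:
  assumes "is_wderiv L u gu" "is_wderiv L w gw"
  shows "is_wderiv L (\<lambda>x. u x - w x) (\<lambda>x. gu x - gw x)"
  using is_wderiv_add[OF assms(1) is_wderiv_cmult[OF assms(2), of "-1"]] by simp

lemma is_wderiv_cnj:
  assumes "is_wderiv L u gu"
  shows "is_wderiv L (\<lambda>x. cnj (u x)) (\<lambda>x. cnj (gu x))"
proof (rule is_wderivI)
  show "L2 L (\<lambda>x. cnj (gu x))" using assms by (intro L2_cnj is_wderiv_L2_deriv)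
  show "cnj (u x) = cnj (u 0) + (LINT t:{0..x}|lborel. cnj (gu t))" if "x \<in> {0..L}" for x
    using is_wderiv_eq[OF assms that] by (simp add: set_integral_cnj)
qed

lemma is_wderiv_of_real:
  fixes h h' :: "real \<Rightarrow> real"
  assumes hd: "\<forall>x\<in>{0..L}. (h has_real_derivative h' x) (at x within {0..L})"
    and hc: "continuous_on {0..L} h'"
  shows "is_wderiv L (\<lambda>x. complex_of_real (h x)) (\<lambda>x. complex_of_real (h' x))"
proof (rule is_wderivI)
  show "L2 L (\<lambda>x. complex_of_real (h' x))" by (rule L2_continuous) (intro continuous_intros hc)
  fix x assume x: "x \<in> {0..L}"
  have "(\<integral>t. indicator {0..x} t *\<^sub>R h' t \<partial>lborel) = h x - h 0"
  proof (rule integral_FTC_atLeastAtMost)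
    fix t assume "0 \<le> t" "t \<le> x"
    then have "(h has_real_derivative h' t) (at t within {0..L})" using hd x by auto
    then have "(h has_real_derivative h' t) (at t within {0..x})"
      by (rule DERIV_subset) (use x in auto)
    then show "(h has_vector_derivative h' t) (at t within {0..x})"
      by (simp add: has_real_derivative_iff_has_vector_derivative)
  next
    show "continuous_on {0..x} h'" by (rule continuous_on_subset[OF hc]) (use x in auto)
  qed (use x in simp)
  then show "complex_of_real (h x) = complex_of_real (h 0) + (LINT t:{0..x}|lborel. complex_of_real (h' t))"
    by (simp add: set_integral_complex_of_real set_lebesgue_integral_def)
qed

lemma is_wderiv_bounded_mult_L2:
  assumes "is_wderiv L u gu" "L2 L p"
  shows "L2 L (\<lambda>x. u x * p x)"
proof -
  obtain B where "B > 0" "\<And>x. x \<in> {0..L} \<Longrightarrow> cmod (u x) \<le> B"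
    using continuous_on_Icc_bounded[OF is_wderiv_continuous[OF assms(1)]] by blast
  then show ?thesis
    by (intro L2_bounded_mult[OF assms(2) L2_measurable[OF is_wderiv_L2[OF assms(1)]], of B]) auto
qed

lemma is_wderiv_integral_increments:
  assumes u: "is_wderiv L u gu" and w: "is_wderiv L w gw" and x: "x \<in> {0..L}"
  shows "(LINT s:{0..x}|lborel. gu s * (w s - w 0)) + (LINT s:{0..x}|lborel. (u s - u 0) * gw s)
      = (u x - u 0) * (w x - w 0)"
proof -
  have "u s - u 0 = (LINT t:{0..s}|lborel. gu t)" "w s - w 0 = (LINT t:{0..s}|lborel. gw t)"
    if "s \<in> {0..x}" for s
    using is_wderiv_eq[OF u, of s] is_wderiv_eq[OF w, of s] that x by auto
  then have "(LINT s:{0..x}|lborel. gu s * (w s - w 0)) = (LINT s:{0..x}|lborel. gu s * (LINT t:{0..s}|lborel. gw t))"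
   "(LINT s:{0..x}|lborel. (u s - u 0) * gw s) = (LINT s:{0..x}|lborel. (LINT t:{0..s}|lborel. gu t) * gw s)"
    by (auto intro!: set_lebesgue_integral_cong)
  then show ?thesis
    using set_integral_mult_indefinite_integrals[OF is_wderiv_integrable[OF u x] is_wderiv_integrable[OF w x]]
      is_wderiv_eq[OF u x] is_wderiv_eq[OF w x] by simp
qed

lemma is_wderiv_mult:
  assumes u: "is_wderiv L u gu" and w: "is_wderiv L w gw"
  shows "is_wderiv L (\<lambda>x. u x * w x) (\<lambda>x. gu x * w x + u x * gw x)"
proof (rule is_wderivI)
  have Lw: "L2 L (\<lambda>x. gu x * w x)"
    using is_wderiv_bounded_mult_L2[OF w is_wderiv_L2_deriv[OF u]] by (simp add: mult.commute)
  have Lu: "L2 L (\<lambda>x. u x * gw x)" by (rule is_wderiv_bounded_mult_L2[OF u is_wderiv_L2_deriv[OF w]])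
  show "L2 L (\<lambda>x. gu x * w x + u x * gw x)" by (rule L2_add[OF Lw Lu])
  fix x assume x: "x \<in> {0..L}"
  define S where "S = {0..x}"
  have sub: "S \<subseteq> {0..L}" using x by (auto simp: S_def)
  have iu: "set_integrable lborel S gu" and iw: "set_integrable lborel S gw"
    using is_wderiv_integrable[OF u x] is_wderiv_integrable[OF w x] by (simp_all add: S_def)
  have iuw: "set_integrable lborel S (\<lambda>s. gu s * w s)" "set_integrable lborel S (\<lambda>s. u s * gw s)"
    using sub by (auto intro!: set_integrable_subset[OF L2_integrable[OF Lw]]
        set_integrable_subset[OF L2_integrable[OF Lu]] simp: S_def)
  have iA: "set_integrable lborel S (\<lambda>s. gu s * (w s - w 0))"
    using set_integral_diff(1)[OF iuw(1) set_integrable_mult_right[OF iu, of "w 0"]]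
    by (simp add: algebra_simps)
  have iB: "set_integrable lborel S (\<lambda>s. (u s - u 0) * gw s)"
    using set_integral_diff(1)[OF iuw(2) set_integrable_mult_right[OF iw, of "u 0"]]
    by (simp add: algebra_simps)
  note core = is_wderiv_integral_increments[OF u w x, folded S_def]
  have iC: "set_integrable lborel S (\<lambda>s. w 0 * gu s + u 0 * gw s)"
    using iu iw by (intro set_integral_add(1) set_integrable_mult_right)
  have "(\<lambda>s. gu s * w s + u s * gw s)
      = (\<lambda>s. (gu s * (w s - w 0) + (u s - u 0) * gw s) + (w 0 * gu s + u 0 * gw s))"
    by (simp add: fun_eq_iff algebra_simps)
  then have "(LINT s:S|lborel. gu s * w s + u s * gw s)
      = ((LINT s:S|lborel. gu s * (w s - w 0)) + (LINT s:S|lborel. (u s - u 0) * gw s))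
        + (w 0 * (LINT s:S|lborel. gu s) + u 0 * (LINT s:S|lborel. gw s))"
    by (simp only: set_integral_add(2)[OF set_integral_add(1)[OF iA iB] iC] set_integral_add(2)[OF iA iB]
        set_integral_add(2)[OF set_integrable_mult_right[OF iu] set_integrable_mult_right[OF iw]]
        set_integral_mult_right)
  then have "(LINT s:S|lborel. gu s * w s + u s * gw s)
      = (u x - u 0) * (w x - w 0) + w 0 * (LINT s:S|lborel. gu s) + u 0 * (LINT s:S|lborel. gw s)"
    unfolding core by (simp add: algebra_simps)
  then show "u x * w x = u 0 * w 0 + (LINT t:{0..x}|lborel. gu t * w t + u t * gw t)"
    using is_wderiv_eq[OF u x] is_wderiv_eq[OF w x] by (simp add: S_def algebra_simps)
qed

lemma is_wderiv_integral_eq_diff: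
  assumes "is_wderiv L v g" "0 \<le> L"
  shows "(LINT x:{0..L}|lborel. g x) = v L - v 0"
  using is_wderiv_eq[OF assms(1), of L] assms(2) by simp

lemma cmod_mult_self: "cmod z * cmod z = Re z * Re z + Im z * Im z"
  using cmod_power2[of z] by (simp add: power2_eq_square)

lemma multiplier_energy_integral:
  fixes h h' :: "real \<Rightarrow> real"
  assumes hd: "\<forall>x\<in>{0..L}. (h has_real_derivative h' x) (at x within {0..L})"
    and hc: "continuous_on {0..L} h'" and h0: "h 0 = 0" and hL: "h L = 0" and L: "0 \<le> L"
    and v: "is_wderiv L v g"
  shows "set_integrable lborel {0..L} (\<lambda>x. h' x * (cmod (v x))\<^sup>2 + 2 * h x * Re (g x * cnj (v x)))"
    and "(LINT x:{0..L}|lborel. h' x * (cmod (v x))\<^sup>2 + 2 * h x * Re (g x * cnj (v x))) = 0"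
proof -
  let ?d = "\<lambda>x. (complex_of_real (h' x) * v x + complex_of_real (h x) * g x) * cnj (v x)
      + complex_of_real (h x) * v x * cnj (g x)"
  have w: "is_wderiv L (\<lambda>x. complex_of_real (h x) * v x * cnj (v x)) ?d"
    using is_wderiv_mult[OF is_wderiv_mult[OF is_wderiv_of_real[OF hd hc] v] is_wderiv_cnj[OF v]] .
  have d: "h' x * (cmod (v x))\<^sup>2 + 2 * h x * Re (g x * cnj (v x)) = Re (?d x)" for x
    by (simp add: cmod_mult_self power2_eq_square algebra_simps)
  have i: "set_integrable lborel {0..L} ?d" by (rule L2_integrable[OF is_wderiv_L2_deriv[OF w]])
  show "set_integrable lborel {0..L} (\<lambda>x. h' x * (cmod (v x))\<^sup>2 + 2 * h x * Re (g x * cnj (v x)))"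
    unfolding d by (rule set_integrable_Re[OF i])
  show "(LINT x:{0..L}|lborel. h' x * (cmod (v x))\<^sup>2 + 2 * h x * Re (g x * cnj (v x))) = 0"
    unfolding d set_integral_Re[OF i] is_wderiv_integral_eq_diff[OF w L] by (simp add: h0 hL)
qed

lemma H10_integration_by_parts:
  assumes v: "H10 L v gv" and w: "is_wderiv L w gw" and L: "0 \<le> L"
  shows "set_integrable lborel {0..L} (\<lambda>x. Re (gw x * cnj (v x)) + Re (w x * cnj (gv x)))"
    and "(LINT x:{0..L}|lborel. Re (gw x * cnj (v x)) + Re (w x * cnj (gv x))) = 0"
proof -
  have v': "is_wderiv L v gv" "v 0 = 0" "v L = 0" using v unfolding H10_def by auto
  have p: "is_wderiv L (\<lambda>x. w x * cnj (v x)) (\<lambda>x. gw x * cnj (v x) + w x * cnj (gv x))"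
    using is_wderiv_mult[OF w is_wderiv_cnj[OF v'(1)]] .
  have i: "set_integrable lborel {0..L} (\<lambda>x. gw x * cnj (v x) + w x * cnj (gv x))"
    by (rule L2_integrable[OF is_wderiv_L2_deriv[OF p]])
  show "set_integrable lborel {0..L} (\<lambda>x. Re (gw x * cnj (v x)) + Re (w x * cnj (gv x)))"
    using set_integrable_Re[OF i] by simp
  show "(LINT x:{0..L}|lborel. Re (gw x * cnj (v x)) + Re (w x * cnj (gv x))) = 0"
    using set_integral_Re[OF i] is_wderiv_integral_eq_diff[OF p L] v' by simp
qed

lemma norm_power2_eq_integral:
  assumes u: "is_wderiv L u gu" and u0: "u 0 = 0" and x: "x \<in> {0..L}"
  shows "(cmod (u x))\<^sup>2 = (LINT t:{0..x}|lborel. 2 * Re (gu t * cnj (u t)))"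
proof -
  have p: "is_wderiv L (\<lambda>x. u x * cnj (u x)) (\<lambda>x. gu x * cnj (u x) + u x * cnj (gu x))"
    using is_wderiv_mult[OF u is_wderiv_cnj[OF u]] .
  have "(cmod (u x))\<^sup>2 = Re (LINT t:{0..x}|lborel. gu t * cnj (u t) + u t * cnj (gu t))"
  proof -
    have "(cmod (u x))\<^sup>2 = Re (u x * cnj (u x))" by (simp add: cmod_mult_self power2_eq_square)
    then show ?thesis using is_wderiv_eq[OF p x] u0 by simp
  qed
  also have "\<dots> = (LINT t:{0..x}|lborel. Re (gu t * cnj (u t) + u t * cnj (gu t)))"
    by (rule set_integral_Re[OF is_wderiv_integrable[OF p x], symmetric])
  also have "\<dots> = (LINT t:{0..x}|lborel. 2 * Re (gu t * cnj (u t)))"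
    by (rule set_lebesgue_integral_cong) simp_all
  finally show ?thesis .
qed

lemma null_integrals_multiplier_energy:
  fixes h h' :: "real \<Rightarrow> real"
  assumes "\<forall>x\<in>{0..L}. (h has_real_derivative h' x) (at x within {0..L})"
    and "continuous_on {0..L} h'" "h 0 = 0" "h L = 0" "0 \<le> L"
    and "\<And>n. is_wderiv L (v n) (g n)"
  shows "null_integrals L (\<lambda>n x. h' x * (cmod (v n x))\<^sup>2 + 2 * h x * Re (g n x * cnj (v n x)))"
  using multiplier_energy_integral[OF assms(1-5) assms(6)] by (intro null_integralsI_zero)

lemma null_integrals_H10_integration_by_parts:
  assumes "\<And>n. H10 L (v n) (gv n)" "\<And>n. is_wderiv L (w n) (gw n)" "0 \<le> L"
  shows "null_integrals L (\<lambda>n x. Re (gw n x * cnj (v n x)) + Re (w n x * cnj (gv n x)))"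
  using H10_integration_by_parts[OF assms(1) assms(2) assms(3)] by (intro null_integralsI_zero)

section \<open>Poincare inequality and coercivity\<close>

lemma set_integral_nonneg_Icc_mono:
  fixes f :: "real \<Rightarrow> real"
  assumes "set_integrable lborel {0..L} f" "\<And>t. t \<in> {0..L} \<Longrightarrow> 0 \<le> f t" "x \<le> L"
  shows "(LINT t:{0..x}|lborel. f t) \<le> (LINT t:{0..L}|lborel. f t)"
  using assms(1) set_integrable_subset[OF assms(1), of "{0..x}"] assms(2,3)
  unfolding set_lebesgue_integral_def set_integrable_def
  by (intro integral_mono) (auto simp: indicator_def)

lemma norm_power2_pair_le:
  assumes u: "is_wderiv L u gu" "u 0 = 0" and v: "is_wderiv L v gv" "v 0 = 0"
    and r: "L2 L r" and s: "L2 L s"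
    and pw: "\<And>x. x \<in> {0..L} \<Longrightarrow> Re (gu x * cnj (u x)) + Re (gv x * cnj (v x))
              \<le> cmod (r x) * cmod (u x) + cmod (s x) * cmod (v x)"
    and t: "t > 0" and x: "x \<in> {0..L}"
  shows "(cmod (u x))\<^sup>2 + (cmod (v x))\<^sup>2 \<le> t * (sqnorm L u + sqnorm L v) + (sqnorm L r + sqnorm L s) / t"
proof -
  define \<phi> where "\<phi> y = t * ((cmod (u y))\<^sup>2 + (cmod (v y))\<^sup>2) + ((cmod (r y))\<^sup>2 + (cmod (s y))\<^sup>2) / t" for y
  have sq: "set_integrable lborel {0..L} (\<lambda>y. (cmod (u y))\<^sup>2)" "set_integrable lborel {0..L} (\<lambda>y. (cmod (v y))\<^sup>2)"
    "set_integrable lborel {0..L} (\<lambda>y. (cmod (r y))\<^sup>2)" "set_integrable lborel {0..L} (\<lambda>y. (cmod (s y))\<^sup>2)"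
    using u v r s by (auto intro: L2_integrable_square is_wderiv_L2)
  then have i\<phi>: "set_integrable lborel {0..L} \<phi>" unfolding \<phi>_def by auto
  have reu: "set_integrable lborel {0..x} (\<lambda>y. 2 * Re (gu y * cnj (u y)))"
    using u x by (intro set_integrable_mult_right set_integrable_Re
        set_integrable_subset[OF L2_integrable_mult[OF is_wderiv_L2_deriv L2_cnj[OF is_wderiv_L2]]]) auto
  have rev: "set_integrable lborel {0..x} (\<lambda>y. 2 * Re (gv y * cnj (v y)))"
    using v x by (intro set_integrable_mult_right set_integrable_Re
        set_integrable_subset[OF L2_integrable_mult[OF is_wderiv_L2_deriv L2_cnj[OF is_wderiv_L2]]]) auto
  note re = set_integral_add(1)[OF reu rev]
  have "(cmod (u x))\<^sup>2 + (cmod (v x))\<^sup>2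
      = (LINT y:{0..x}|lborel. 2 * Re (gu y * cnj (u y)) + 2 * Re (gv y * cnj (v y)))"
    by (simp only: norm_power2_eq_integral[OF u x] norm_power2_eq_integral[OF v x]
        set_integral_add(2)[OF reu rev])
  also have "\<dots> \<le> (LINT y:{0..x}|lborel. \<phi> y)"
  proof (rule set_integral_mono[OF re])
    show "set_integrable lborel {0..x} \<phi>" by (rule set_integrable_subset[OF i\<phi>]) (use x in auto)
    fix y assume "y \<in> {0..x}"
    then have "2 * Re (gu y * cnj (u y)) + 2 * Re (gv y * cnj (v y))
        \<le> 2 * (cmod (u y) * cmod (r y)) + 2 * (cmod (v y) * cmod (s y))"
      using pw[of y] x by (auto simp: mult.commute)
    also have "\<dots> \<le> \<phi> y"
      using two_mult_le_weighted_squares[OF t, of "cmod (u y)" "cmod (r y)"]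
        two_mult_le_weighted_squares[OF t, of "cmod (v y)" "cmod (s y)"]
      by (simp add: \<phi>_def add_divide_distrib distrib_left)
    finally show "2 * Re (gu y * cnj (u y)) + 2 * Re (gv y * cnj (v y)) \<le> \<phi> y" .
  qed
  also have "\<dots> \<le> (LINT y:{0..L}|lborel. \<phi> y)"
    by (rule set_integral_nonneg_Icc_mono[OF i\<phi>]) (use t x in \<open>auto simp: \<phi>_def\<close>)
  also have "\<dots> = t * (sqnorm L u + sqnorm L v) + (sqnorm L r + sqnorm L s) / t"
    using sq unfolding \<phi>_def sqnorm_def by simp
  finally show ?thesis .
qed

lemma poincare_pair:
  assumes u: "is_wderiv L u gu" "u 0 = 0" and v: "is_wderiv L v gv" "v 0 = 0"
    and L: "L > 0" and r: "L2 L r" and s: "L2 L s"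
    and pw: "\<And>x. x \<in> {0..L} \<Longrightarrow> Re (gu x * cnj (u x)) + Re (gv x * cnj (v x))
              \<le> cmod (r x) * cmod (u x) + cmod (s x) * cmod (v x)"
  shows "sqnorm L u + sqnorm L v \<le> 4 * L\<^sup>2 * (sqnorm L r + sqnorm L s)"
proof -
  define t where "t = 1 / (2 * L)"
  define c where "c = t * (sqnorm L u + sqnorm L v) + (sqnorm L r + sqnorm L s) / t"
  have t: "t > 0" using L by (simp add: t_def)
  have "sqnorm L u + sqnorm L v = (LINT x:{0..L}|lborel. (cmod (u x))\<^sup>2 + (cmod (v x))\<^sup>2)"
    using u v unfolding sqnorm_def by (simp add: L2_integrable_square is_wderiv_L2)
  also have "\<dots> \<le> (LINT x:{0..L}|lborel. c)"
    unfolding c_def using u v r s L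
    by (intro set_integral_mono norm_power2_pair_le[OF u v r s pw t]
        set_integral_add(1) L2_integrable_square is_wderiv_L2) (auto intro: borel_integrable_atLeastAtMost')
  also have "\<dots> = L * c" using L by (simp add: set_integral_const)
  also have "\<dots> = (sqnorm L u + sqnorm L v) / 2 + 2 * (L\<^sup>2 * (sqnorm L r + sqnorm L s))"
    using L by (simp add: c_def t_def field_simps power2_eq_square)
  finally have "sqnorm L u + sqnorm L v \<le> (sqnorm L u + sqnorm L v) / 2 + 2 * (L\<^sup>2 * (sqnorm L r + sqnorm L s))" .
  then show ?thesis by (simp add: field_simps)
qed

lemma poincare:
  assumes u: "is_wderiv L u gu" "u 0 = 0" and L: "L > 0"
  shows "sqnorm L u \<le> 4 * L\<^sup>2 * sqnorm L gu"
proof -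
  have z: "is_wderiv L (\<lambda>x. 0) (\<lambda>x. 0)" by (rule is_wderivI) (auto intro: L2_continuous)
  have "Re (gu x * cnj (u x)) \<le> cmod (gu x) * cmod (u x)" for x
    using complex_Re_le_cmod[of "gu x * cnj (u x)"] by (simp add: norm_mult)
  then have "sqnorm L u + sqnorm L (\<lambda>x. 0) \<le> 4 * L\<^sup>2 * (sqnorm L gu + sqnorm L (\<lambda>x. 0))"
    by (intro poincare_pair[OF u z _ L is_wderiv_L2_deriv[OF u(1)]]) (auto intro: L2_continuous)
  then show ?thesis by (simp add: sqnorm_def)
qed

text \<open>The couplings through \<open>l\<close> cancel only in the sum \<open>Re (u1x cnj u1) + Re (u5x cnj u5)\<close>,
  which is why the Poincare inequality is needed for pairs.\<close>
lemma poincare_coupled_pair: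
  fixes l :: real
  assumes u1: "is_wderiv L u1 u1x" "u1 0 = 0" and u5: "is_wderiv L u5 u5x" "u5 0 = 0" and L: "L > 0"
  shows "sqnorm L u1 + sqnorm L u5 \<le> 4 * L\<^sup>2 * (sqnorm L (\<lambda>x. u1x x + of_real l * u5 x)
     + sqnorm L (\<lambda>x. u5x x - of_real l * u1 x))"
proof (rule poincare_pair[OF u1 u5 L])
  show "L2 L (\<lambda>x. u1x x + of_real l * u5 x)" "L2 L (\<lambda>x. u5x x - of_real l * u1 x)"
    using u1 u5 by (intro L2_add L2_diff L2_cmult is_wderiv_L2 is_wderiv_L2_deriv; fast)+
  fix x
  have "Re (u1x x * cnj (u1 x)) + Re (u5x x * cnj (u5 x))
      = Re ((u1x x + of_real l * u5 x) * cnj (u1 x)) + Re ((u5x x - of_real l * u1 x) * cnj (u5 x))"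
    by (simp add: algebra_simps)
  also have "\<dots> \<le> cmod (u1x x + of_real l * u5 x) * cmod (u1 x) + cmod (u5x x - of_real l * u1 x) * cmod (u5 x)"
    by (intro add_mono complex_Re_le_cmod[THEN order_trans]) (simp_all add: norm_mult)
  finally show "Re (u1x x * cnj (u1 x)) + Re (u5x x * cnj (u5 x))
      \<le> cmod (u1x x + of_real l * u5 x) * cmod (u1 x) + cmod (u5x x - of_real l * u1 x) * cmod (u5 x)" .
qed

text \<open>Poincare gives \<open>u3\<close>, then the coupled pair inequality gives \<open>u1, u5\<close>, and the
  derivatives follow from the triangle inequality.\<close>
lemma elastic_energy_coercive:
  fixes l L :: real
  assumes L: "L > 0"
  obtains C where "\<And>u1 u1x u3 u3x u5 u5x. H10 L u1 u1x \<Longrightarrow> H10 L u3 u3x \<Longrightarrow> H10 L u5 u5x \<Longrightarrow>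
    sqnorm L u1 + sqnorm L u1x + sqnorm L u3 + sqnorm L u3x + sqnorm L u5 + sqnorm L u5x
    \<le> C * (sqnorm L (\<lambda>x. u1x x + u3 x + of_real l * u5 x) + sqnorm L u3x
           + sqnorm L (\<lambda>x. u5x x - of_real l * u1 x))"
proof -
  define M where "M = 4 * L\<^sup>2"
  define K where "K = M * (3 + 2 * M)"
  have MK: "0 \<le> M" "0 \<le> K" by (simp_all add: M_def K_def)
  show thesis
  proof (rule that[of "7 + 5 * M + K + 4 * l\<^sup>2 * K"])
    fix u1 u1x u3 u3x u5 u5x
    assume "H10 L u1 u1x" "H10 L u3 u3x" "H10 L u5 u5x"
    then have w: "is_wderiv L u1 u1x" "u1 0 = 0" "is_wderiv L u3 u3x" "u3 0 = 0"
      "is_wderiv L u5 u5x" "u5 0 = 0" by (auto simp: H10_def)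
    have Lu: "L2 L u1" "L2 L u1x" "L2 L u3" "L2 L u5" "L2 L u5x"
      using w by (auto intro: is_wderiv_L2 is_wderiv_L2_deriv)
    define A where "A = sqnorm L (\<lambda>x. u1x x + u3 x + of_real l * u5 x)"
    define B where "B = sqnorm L u3x"
    define C where "C = sqnorm L (\<lambda>x. u5x x - of_real l * u1 x)"
    define P where "P = A + B + C"
    define r1 where "r1 = (\<lambda>x. u1x x + of_real l * u5 x)"
    have ABC: "0 \<le> A" "0 \<le> B" "0 \<le> C" by (simp_all add: A_def B_def C_def sqnorm_nonneg)
    have MB: "M * B \<le> M * P" using ABC MK by (intro mult_left_mono) (auto simp: P_def)
    have Lr1: "L2 L r1" unfolding r1_def by (intro L2_add L2_cmult Lu)
    have s1: "sqnorm L u3 \<le> M * B" unfolding M_def B_def by (rule poincare[OF w(3,4) L])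
    have s2: "sqnorm L r1 \<le> 2 * A + 2 * (M * B)"
    proof -
      have "sqnorm L r1 \<le> 2 * A + 2 * sqnorm L (\<lambda>x. - u3 x)"
        using sqnorm_add_le[OF L2_add[OF L2_add[OF Lu(2,3)] L2_cmult[OF Lu(4), of "of_real l"]]
            L2_cmult[OF Lu(3), of "-1"]]
        by (simp add: A_def r1_def)
      then show ?thesis using s1 sqnorm_cmult[of L "-1" u3] by simp
    qed
    have s3: "sqnorm L u1 + sqnorm L u5 \<le> M * (sqnorm L r1 + C)"
      unfolding M_def C_def r1_def by (rule poincare_coupled_pair[OF w(1,2) w(5,6) L])
    have s4: "sqnorm L u1x \<le> 2 * sqnorm L r1 + 2 * (l\<^sup>2 * sqnorm L u5)"
      using sqnorm_add_le[OF Lr1 L2_cmult[OF Lu(4), of "- of_real l"]] sqnorm_cmult[of L "- of_real l" u5]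
      by (simp add: r1_def)
    have s5: "sqnorm L u5x \<le> 2 * C + 2 * (l\<^sup>2 * sqnorm L u1)"
      using sqnorm_add_le[OF L2_diff[OF Lu(5) L2_cmult[OF Lu(1), of "of_real l"]] L2_cmult[OF Lu(1), of "of_real l"]]
      by (simp add: C_def sqnorm_cmult)
    have "M * (sqnorm L r1 + C) \<le> M * (3 * P + 2 * (M * P))"
      using s2 MB ABC MK by (intro mult_left_mono) (auto simp: P_def)
    also have "\<dots> = K * P" by (simp add: K_def algebra_simps)
    finally have u15: "sqnorm L u1 + sqnorm L u5 \<le> K * P" using s3 by linarith
    then have u_each: "sqnorm L u1 \<le> K * P" "sqnorm L u5 \<le> K * P"
      using sqnorm_nonneg[of L u1] sqnorm_nonneg[of L u5] by linarith+
    have "l\<^sup>2 * sqnorm L u1 \<le> l\<^sup>2 * (K * P)" "l\<^sup>2 * sqnorm L u5 \<le> l\<^sup>2 * (K * P)"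
      using u_each by (simp_all add: mult_left_mono)
    moreover have "(7 + 5 * M + K + 4 * l\<^sup>2 * K) * P = 7 * P + 5 * (M * P) + K * P + 4 * (l\<^sup>2 * (K * P))"
      by (simp add: algebra_simps)
    ultimately have "sqnorm L u1 + sqnorm L u1x + sqnorm L u3 + sqnorm L u3x + sqnorm L u5 + sqnorm L u5x
        \<le> (7 + 5 * M + K + 4 * l\<^sup>2 * K) * P"
      using u15 s1 s2 s4 s5 MB ABC P_def B_def by linarith
    then show "sqnorm L u1 + sqnorm L u1x + sqnorm L u3 + sqnorm L u3x + sqnorm L u5 + sqnorm L u5x
        \<le> (7 + 5 * M + K + 4 * l\<^sup>2 * K) * (sqnorm L (\<lambda>x. u1x x + u3 x + of_real l * u5 x)
           + sqnorm L u3x + sqnorm L (\<lambda>x. u5x x - of_real l * u1 x))"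
      by (simp add: P_def A_def B_def C_def)
  qed
qed

definition Henergy ::
  "real \<Rightarrow> real \<Rightarrow> real \<Rightarrow> real \<Rightarrow> real \<Rightarrow> real \<Rightarrow> real \<Rightarrow>
   (real \<Rightarrow> complex) \<Rightarrow> (real \<Rightarrow> complex) \<Rightarrow> (real \<Rightarrow> complex) \<Rightarrow>
   (real \<Rightarrow> complex) \<Rightarrow> (real \<Rightarrow> complex) \<Rightarrow> (real \<Rightarrow> complex) \<Rightarrow>
   (real \<Rightarrow> complex) \<Rightarrow> (real \<Rightarrow> complex) \<Rightarrow> (real \<Rightarrow> complex) \<Rightarrow> real" where
  "Henergy rho1 rho2 k1 k2 k3 l L p1 p1x p2 p3 p3x p4 p5 p5x p6 =
     k1 * sqnorm L (\<lambda>x. p1x x + p3 x + of_real l * p5 x) + rho1 * sqnorm L p2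
   + k2 * sqnorm L p3x + rho2 * sqnorm L p4
   + k3 * sqnorm L (\<lambda>x. p5x x - of_real l * p1 x) + rho1 * sqnorm L p6"

lemma Hnorm_eq_sqrt_Henergy:
  assumes "L2 L p1" "L2 L p1x" "L2 L p2" "L2 L p3" "L2 L p3x" "L2 L p4" "L2 L p5" "L2 L p5x" "L2 L p6"
  shows "Hnorm rho1 rho2 k1 k2 k3 l L p1 p1x p2 p3 p3x p4 p5 p5x p6
    = sqrt (Henergy rho1 rho2 k1 k2 k3 l L p1 p1x p2 p3 p3x p4 p5 p5x p6)"
proof -
  have "set_integrable lborel {0..L} (\<lambda>x. (cmod (p1x x + p3 x + of_real l * p5 x))\<^sup>2)"
    "set_integrable lborel {0..L} (\<lambda>x. (cmod (p5x x - of_real l * p1 x))\<^sup>2)"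
    by (intro L2_integrable_square L2_add L2_diff L2_cmult assms)+
  with assms show ?thesis
    unfolding Hnorm_def Henergy_def sqnorm_def by (simp add: L2_integrable_square)
qed

lemma Hnorm_scale:
  fixes c :: real
  shows "Hnorm rho1 rho2 k1 k2 k3 l L (\<lambda>x. of_real c * p1 x) (\<lambda>x. of_real c * p1x x) (\<lambda>x. of_real c * p2 x)
     (\<lambda>x. of_real c * p3 x) (\<lambda>x. of_real c * p3x x) (\<lambda>x. of_real c * p4 x)
     (\<lambda>x. of_real c * p5 x) (\<lambda>x. of_real c * p5x x) (\<lambda>x. of_real c * p6 x)
   = \<bar>c\<bar> * Hnorm rho1 rho2 k1 k2 k3 l L p1 p1x p2 p3 p3x p4 p5 p5x p6"
proof -
  have e: "k1 * (cmod (of_real c * p1x x + of_real c * p3 x + of_real l * (of_real c * p5 x)))\<^sup>2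
      + rho1 * (cmod (of_real c * p2 x))\<^sup>2 + k2 * (cmod (of_real c * p3x x))\<^sup>2
      + rho2 * (cmod (of_real c * p4 x))\<^sup>2
      + k3 * (cmod (of_real c * p5x x - of_real l * (of_real c * p1 x)))\<^sup>2 + rho1 * (cmod (of_real c * p6 x))\<^sup>2
    = c\<^sup>2 * (k1 * (cmod (p1x x + p3 x + of_real l * p5 x))\<^sup>2 + rho1 * (cmod (p2 x))\<^sup>2
      + k2 * (cmod (p3x x))\<^sup>2 + rho2 * (cmod (p4 x))\<^sup>2
      + k3 * (cmod (p5x x - of_real l * p1 x))\<^sup>2 + rho1 * (cmod (p6 x))\<^sup>2)" for x
  proof -
    have "of_real c * p1x x + of_real c * p3 x + of_real l * (of_real c * p5 x)
        = of_real c * (p1x x + p3 x + of_real l * p5 x)"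
      "of_real c * p5x x - of_real l * (of_real c * p1 x) = of_real c * (p5x x - of_real l * p1 x)"
      by (simp_all add: algebra_simps)
    then show ?thesis
      by (simp only: norm_mult power_mult_distrib norm_of_real power2_abs) (simp add: algebra_simps)
  qed
  show ?thesis unfolding Hnorm_def e set_integral_mult_right by (simp add: real_sqrt_mult)
qed

lemma Henergy_coercive:
  fixes rho1 rho2 k1 k2 k3 l L :: real
  assumes pos: "rho1 > 0" "rho2 > 0" "k1 > 0" "k2 > 0" "k3 > 0" "L > 0"
  obtains C where "\<And>p1 p1x p2 p3 p3x p4 p5 p5x p6 q. H10 L p1 p1x \<Longrightarrow> H10 L p3 p3x \<Longrightarrow> H10 L p5 p5x \<Longrightarrow>
    q \<in> {p1, p1x, p2, p3, p3x, p4, p5, p5x, p6,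
      \<lambda>x. p1x x + p3 x + of_real l * p5 x, \<lambda>x. p5x x - of_real l * p1 x} \<Longrightarrow>
    sqnorm L q \<le> C * Henergy rho1 rho2 k1 k2 k3 l L p1 p1x p2 p3 p3x p4 p5 p5x p6"
proof -
  obtain C0 where C0: "\<And>u1 u1x u3 u3x u5 u5x. H10 L u1 u1x \<Longrightarrow> H10 L u3 u3x \<Longrightarrow> H10 L u5 u5x \<Longrightarrow>
    sqnorm L u1 + sqnorm L u1x + sqnorm L u3 + sqnorm L u3x + sqnorm L u5 + sqnorm L u5x
    \<le> C0 * (sqnorm L (\<lambda>x. u1x x + u3 x + of_real l * u5 x) + sqnorm L u3x
           + sqnorm L (\<lambda>x. u5x x - of_real l * u1 x))"
    using elastic_energy_coercive[OF pos(6)] by blast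
  define m where "m = min (min rho1 rho2) (min k1 (min k2 k3))"
  have m: "0 < m" "m \<le> rho1" "m \<le> rho2" "m \<le> k1" "m \<le> k2" "m \<le> k3"
    using pos by (auto simp: m_def)
  show thesis
  proof (rule that[of "(\<bar>C0\<bar> + 1) / m"])
    fix p1 p1x p2 p3 p3x p4 p5 p5x p6 q
    assume H: "H10 L p1 p1x" "H10 L p3 p3x" "H10 L p5 p5x"
      and q: "q \<in> {p1, p1x, p2, p3, p3x, p4, p5, p5x, p6,
        \<lambda>x. p1x x + p3 x + of_real l * p5 x, \<lambda>x. p5x x - of_real l * p1 x}"
    define A where "A = sqnorm L (\<lambda>x. p1x x + p3 x + of_real l * p5 x)
      + sqnorm L p3x + sqnorm L (\<lambda>x. p5x x - of_real l * p1 x)"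
    define N where "N = sqnorm L p2 + sqnorm L p4 + sqnorm L p6"
    have A0: "0 \<le> A" "0 \<le> N" by (simp_all add: A_def N_def sqnorm_nonneg add_nonneg_nonneg)
    have mono: "m * sqnorm L q \<le> c * sqnorm L q" if "m \<le> c" for c q
      using that by (simp add: mult_right_mono sqnorm_nonneg)
    have "m * (A + N) \<le> Henergy rho1 rho2 k1 k2 k3 l L p1 p1x p2 p3 p3x p4 p5 p5x p6"
      unfolding Henergy_def A_def N_def
      using mono[OF m(4), of "\<lambda>x. p1x x + p3 x + of_real l * p5 x"] mono[OF m(5), of p3x]
        mono[OF m(6), of "\<lambda>x. p5x x - of_real l * p1 x"] mono[OF m(2), of p2] mono[OF m(3), of p4]
        mono[OF m(2), of p6]
      by (simp add: distrib_left)
    then have AN: "A + N \<le> Henergy rho1 rho2 k1 k2 k3 l L p1 p1x p2 p3 p3x p4 p5 p5x p6 / m"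
      using m(1) by (simp add: field_simps)
    have "C0 * A \<le> \<bar>C0\<bar> * A" using A0 by (simp add: mult_right_mono)
    have "sqnorm L q \<le> sum_list (map (sqnorm L) [p1, p1x, p2, p3, p3x, p4, p5, p5x, p6,
        \<lambda>x. p1x x + p3 x + of_real l * p5 x, \<lambda>x. p5x x - of_real l * p1 x])"
      using q by (intro member_le_sum_list) (auto simp: sqnorm_nonneg)
    also have "\<dots> \<le> \<bar>C0\<bar> * A + A + N"
      using C0[OF H] sqnorm_nonneg[of L p3x] \<open>C0 * A \<le> \<bar>C0\<bar> * A\<close> unfolding A_def N_def
      by simp
    also have "\<dots> \<le> (\<bar>C0\<bar> + 1) * (A + N)"
      using A0 by (simp add: algebra_simps)
    also have "\<dots> \<le> (\<bar>C0\<bar> + 1) * (Henergy rho1 rho2 k1 k2 k3 l L p1 p1x p2 p3 p3x p4 p5 p5x p6 / m)"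
      using AN by (intro mult_left_mono) auto
    finally show "sqnorm L q \<le> (\<bar>C0\<bar> + 1) / m * Henergy rho1 rho2 k1 k2 k3 l L p1 p1x p2 p3 p3x p4 p5 p5x p6"
      by simp
  qed
qed

section \<open>Pointwise identities for the resolvent equations\<close>

context
  fixes lam a rho1 rho2 k1 k2 k3 l :: real
    and v1 v1x v1xx v2 v2x v3 v3x v3xx v4 v4x v5 v5x v5xx v6 v6x f1 f1x f2 f3 f3x f4 f5 f5x f6 :: complex
  assumes rho: "rho1 \<noteq> 0" "rho2 \<noteq> 0"
    and f1: "f1 = \<i> * of_real lam * v1 - v2" and f1x: "f1x = \<i> * of_real lam * v1x - v2x"
    and f2: "f2 = \<i> * of_real lam * v2 - (of_real (k1 / rho1) * (v1xx + v3x + of_real l * v5x)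
              + of_real (l * k3 / rho1) * (v5x - of_real l * v1))"
    and f3: "f3 = \<i> * of_real lam * v3 - v4" and f3x: "f3x = \<i> * of_real lam * v3x - v4x"
    and f4: "f4 = \<i> * of_real lam * v4 - (of_real (k2 / rho2) * v3xx
              - of_real (k1 / rho2) * (v1x + v3 + of_real l * v5))"
    and f5: "f5 = \<i> * of_real lam * v5 - v6" and f5x: "f5x = \<i> * of_real lam * v5x - v6x"
    and f6: "f6 = \<i> * of_real lam * v6 - (of_real (k3 / rho1) * (v5xx - of_real l * v1x)
              - of_real (l * k1 / rho1) * (v1x + v3 + of_real l * v5) - of_real (a / rho1) * v6)"
begin

lemma energy_multiplier_identity:
  fixes h h' :: real
  shows "h' * (rho1 * (cmod (lam * v1))\<^sup>2 + k1 * (cmod v1x)\<^sup>2 + rho2 * (cmod (lam * v3))\<^sup>2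
             + k2 * (cmod v3x)\<^sup>2 + rho1 * (cmod (lam * v5))\<^sup>2 + k3 * (cmod v5x)\<^sup>2)
   = rho1 * (h' * (cmod v2)\<^sup>2 + 2 * h * Re (v2x * cnj v2))
      + rho2 * (h' * (cmod v4)\<^sup>2 + 2 * h * Re (v4x * cnj v4))
      + rho1 * (h' * (cmod v6)\<^sup>2 + 2 * h * Re (v6x * cnj v6))
      + k1 * (h' * (cmod v1x)\<^sup>2 + 2 * h * Re (v1xx * cnj v1x))
      + k2 * (h' * (cmod v3x)\<^sup>2 + 2 * h * Re (v3xx * cnj v3x))
      + k3 * (h' * (cmod v5x)\<^sup>2 + 2 * h * Re (v5xx * cnj v5x))
   + Re (of_real (2 * h * rho1) * f2 * cnj v1x + of_real (2 * h * rho2) * f4 * cnj v3x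
       + of_real (2 * h * rho1) * f6 * cnj v5x
       + of_real (2 * h * rho1) * f1x * cnj v2 + of_real (2 * h * rho2) * f3x * cnj v4
       + of_real (2 * h * rho1) * f5x * cnj v6
       + of_real (- 2 * h * l\<^sup>2 * k3) * v1 * cnj v1x + of_real (- 2 * h * k1) * v3 * cnj v3x
       + of_real (- 2 * h * k1 * l) * v5 * cnj v3x + of_real (- 2 * h * l * k1) * v3 * cnj v5x
       + of_real (- 2 * h * l\<^sup>2 * k1) * v5 * cnj v5x + of_real (- 2 * h) * (a * v6) * cnj v5x
       + of_real (h' * rho1) * f1 * cnj (2 * v2 + f1) + of_real (h' * rho2) * f3 * cnj (2 * v4 + f3)
       + of_real (h' * rho1) * f5 * cnj (2 * v6 + f5))"
proof -
  have G: "of_real (2 * h * rho1) * f2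
      = of_real (2 * h) * (\<i> * lam * rho1 * v2 - k1 * (v1xx + v3x + l * v5x) - l * k3 * (v5x - l * v1))"
    "of_real (2 * h * rho2) * f4
      = of_real (2 * h) * (\<i> * lam * rho2 * v4 - k2 * v3xx + k1 * (v1x + v3 + l * v5))"
    "of_real (2 * h * rho1) * f6
      = of_real (2 * h) * (\<i> * lam * rho1 * v6 - k3 * (v5xx - l * v1x) + l * k1 * (v1x + v3 + l * v5) + a * v6)"
    using rho unfolding f2 f4 f6 by (simp_all add: field_simps)
  show ?thesis
    unfolding G f1 f1x f3 f3x f5 f5x by (simp add: power2_eq_square cmod_mult_self algebra_simps)
qed

text \<open>Pointwise form of \<open>Re (F, U)\<^sub>H = \<integral> a |v\<^sup>6|\<^sup>2\<close>.\<close>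
lemma dissipation_identity:
  "a * (cmod v6)\<^sup>2 = k1 * (Re ((v1xx + v3x + l * v5x) * cnj v2) + Re ((v1x + v3 + l * v5) * cnj v2x))
      + k2 * (Re (v3xx * cnj v4) + Re (v3x * cnj v4x))
      + k3 * (Re ((v5xx - l * v1x) * cnj v6) + Re ((v5x - l * v1) * cnj v6x))
    + Re (of_real k1 * (f1x + f3 + l * f5) * cnj (v1x + v3 + l * v5) + of_real rho1 * f2 * cnj v2
      + of_real k2 * f3x * cnj v3x + of_real rho2 * f4 * cnj v4
      + of_real k3 * (f5x - l * f1) * cnj (v5x - l * v1) + of_real rho1 * f6 * cnj v6)"
proof -
  have G: "of_real rho1 * f2 = \<i> * lam * rho1 * v2 - k1 * (v1xx + v3x + l * v5x) - l * k3 * (v5x - l * v1)"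
    "of_real rho2 * f4 = \<i> * lam * rho2 * v4 - k2 * v3xx + k1 * (v1x + v3 + l * v5)"
    "of_real rho1 * f6
      = \<i> * lam * rho1 * v6 - k3 * (v5xx - l * v1x) + l * k1 * (v1x + v3 + l * v5) + a * v6"
    using rho unfolding f2 f4 f6 by (simp_all add: field_simps)
  show ?thesis
    unfolding G f1 f1x f3 f3x f5 f5x by (simp add: power2_eq_square cmod_mult_self algebra_simps)
qed

end

section \<open>Resolvent sequences\<close>

lemma Hnorm_tendsto_0_unscaled:
  fixes lam :: "nat \<Rightarrow> real" and ell :: nat
  assumes lam: "filterlim (\<lambda>n. \<bar>lam n\<bar>) at_top sequentially"
    and lim: "(\<lambda>n. Hnorm rho1 rho2 k1 k2 k3 l L
       (\<lambda>x. of_real (lam n ^ ell) * p1 n x) (\<lambda>x. of_real (lam n ^ ell) * p1x n x)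
       (\<lambda>x. of_real (lam n ^ ell) * p2 n x) (\<lambda>x. of_real (lam n ^ ell) * p3 n x)
       (\<lambda>x. of_real (lam n ^ ell) * p3x n x) (\<lambda>x. of_real (lam n ^ ell) * p4 n x)
       (\<lambda>x. of_real (lam n ^ ell) * p5 n x) (\<lambda>x. of_real (lam n ^ ell) * p5x n x)
       (\<lambda>x. of_real (lam n ^ ell) * p6 n x)) \<longlonglongrightarrow> 0"
  shows "(\<lambda>n. Hnorm rho1 rho2 k1 k2 k3 l L (p1 n) (p1x n) (p2 n) (p3 n) (p3x n) (p4 n)
     (p5 n) (p5x n) (p6 n)) \<longlonglongrightarrow> 0"
proof -
  define H where "H n = Hnorm rho1 rho2 k1 k2 k3 l L (p1 n) (p1x n) (p2 n) (p3 n) (p3x n) (p4 n)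
     (p5 n) (p5x n) (p6 n)" for n
  have "(\<lambda>n. \<bar>lam n ^ ell\<bar> * H n) \<longlonglongrightarrow> 0" using lim unfolding Hnorm_scale H_def .
  moreover have "\<forall>\<^sub>F n in sequentially. norm (H n) \<le> norm (\<bar>lam n ^ ell\<bar> * H n)"
    using eventually_ge_at_top[of 1, THEN filterlim_iff[THEN iffD1, OF lam, rule_format]]
    by eventually_elim (simp add: abs_mult power_abs one_le_power mult_le_cancel_right1)
  ultimately have "H \<longlonglongrightarrow> 0" by (rule Lim_null_comparison[OF _ tendsto_norm_zero, rotated])
  then show ?thesis by (simp add: H_def[abs_def])
qed

lemma displacement_tendsto_0:
  fixes lam :: "nat \<Rightarrow> real" and v w f :: "nat \<Rightarrow> real \<Rightarrow> complex"
  assumes lam: "filterlim (\<lambda>n. \<bar>lam n\<bar>) at_top sequentially"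
    and eq: "\<And>n x. f n x = \<i> * of_real (lam n) * v n x - w n x"
    and w: "\<And>n. L2 L (w n)" "Bseq (\<lambda>n. sqnorm L (w n))"
    and f: "\<And>n. L2 L (f n)" "(\<lambda>n. sqnorm L (f n)) \<longlonglongrightarrow> 0"
  shows "(\<lambda>n. sqnorm L (v n)) \<longlonglongrightarrow> 0"
proof -
  obtain K where K: "\<And>n. sqnorm L (w n) \<le> K"
    using w(2) unfolding Bseq_def by (metis abs_le_D1 real_norm_def)
  have bound: "sqnorm L (v n) \<le> (inverse \<bar>lam n\<bar>)\<^sup>2 * (2 * K + 2 * sqnorm L (f n))"
    if "lam n \<noteq> 0" for n
  proof -
    have c: "(cmod (- \<i> / of_real (lam n)))\<^sup>2 = (inverse \<bar>lam n\<bar>)\<^sup>2"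
      by (simp add: norm_divide norm_mult norm_inverse divide_inverse)
    have "v n = (\<lambda>x. (- \<i> / of_real (lam n)) * (w n x + f n x))"
      using that by (simp add: fun_eq_iff eq field_simps)
    then have "sqnorm L (v n) = (inverse \<bar>lam n\<bar>)\<^sup>2 * sqnorm L (\<lambda>x. w n x + f n x)"
      by (simp only: sqnorm_cmult c)
    also have "\<dots> \<le> (inverse \<bar>lam n\<bar>)\<^sup>2 * (2 * K + 2 * sqnorm L (f n))"
      using sqnorm_add_le[OF w(1)[of n] f(1)[of n]] K[of n] by (intro mult_left_mono) auto
    finally show ?thesis .
  qed
  have "(\<lambda>n. (inverse \<bar>lam n\<bar>)\<^sup>2 * (2 * K + 2 * sqnorm L (f n))) \<longlonglongrightarrow> 0\<^sup>2 * (2 * K + 2 * 0)"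
    by (intro tendsto_intros tendsto_inverse_0_at_top[OF lam] f(2))
  then have up: "(\<lambda>n. (inverse \<bar>lam n\<bar>)\<^sup>2 * (2 * K + 2 * sqnorm L (f n))) \<longlonglongrightarrow> 0" by simp
  have "\<forall>\<^sub>F n in sequentially. sqnorm L (v n) \<le> (inverse \<bar>lam n\<bar>)\<^sup>2 * (2 * K + 2 * sqnorm L (f n))"
    using eventually_gt_at_top[of 0, THEN filterlim_iff[THEN iffD1, OF lam, rule_format]]
    by eventually_elim (simp add: bound)
  then show ?thesis
    by (rule tendsto_sandwich[OF always_eventually[OF allI[OF sqnorm_nonneg]] _ tendsto_const up])
qed

lemma Bseq_sqnorm_add:
  assumes p: "\<And>n. L2 L (p n)" "Bseq (\<lambda>n. sqnorm L (p n))"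
    and q: "\<And>n. L2 L (q n)" "Bseq (\<lambda>n. sqnorm L (q n))"
  shows "Bseq (\<lambda>n. sqnorm L (\<lambda>x. c * p n x + q n x))"
proof -
  obtain K1 K2 where K: "\<And>n. sqnorm L (p n) \<le> K1" "\<And>n. sqnorm L (q n) \<le> K2"
    using p(2) q(2) unfolding Bseq_def by (metis abs_le_D1 real_norm_def)
  have "sqnorm L (\<lambda>x. c * p n x + q n x) \<le> 2 * ((cmod c)\<^sup>2 * K1) + 2 * K2" for n
  proof -
    have "(cmod c)\<^sup>2 * sqnorm L (p n) \<le> (cmod c)\<^sup>2 * K1" using K(1) by (simp add: mult_left_mono)
    then show ?thesis
      using sqnorm_add_le[OF L2_cmult[OF p(1)[of n], of c] q(1)[of n]] K(2)[of n]
      by (simp add: sqnorm_cmult)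
  qed
  then show ?thesis by (intro BseqI'[where K="2 * ((cmod c)\<^sup>2 * K1) + 2 * K2"]) (simp add: sqnorm_nonneg)
qed

lemma tendsto_0_if_le_mult:
  fixes f g :: "nat \<Rightarrow> real"
  assumes "\<And>n. 0 \<le> f n" "\<And>n. f n \<le> C * g n" "g \<longlonglongrightarrow> 0"
  shows "f \<longlonglongrightarrow> 0"
  by (rule tendsto_sandwich[OF always_eventually[OF allI] always_eventually[OF allI] tendsto_const
        tendsto_mult_right_zero[OF assms(3)]]) (use assms in auto)

lemma Bseq_of_tendsto_0:
  fixes f :: "nat \<Rightarrow> real"
  shows "f \<longlonglongrightarrow> 0 \<Longrightarrow> Bseq f"
  using convergent_imp_Bseq convergentI by blast

lemma damping_coefficient:
  fixes a :: "real \<Rightarrow> real"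
  assumes beta: "0 < beta" "beta < L"
    and a_in: "\<forall>x\<in>{0<..<beta}. a x = a0" and a_out: "\<forall>x\<in>{beta<..<L}. a x = 0" and a0: "a0 > 0"
  shows "a \<in> borel_measurable (restrict_space lborel {0..L})"
    and "AE x in lborel. x \<in> {0..L} \<longrightarrow> 0 \<le> a x \<and> a x \<le> a0"
proof -
  have "(\<lambda>x. indicator {0..L} x *\<^sub>R a x) = (\<lambda>x. a0 * indicator {0<..<beta} x + a 0 * indicator {0} x
      + a beta * indicator {beta} x + a L * indicator {L} x)"
  proof
    fix x
    consider "x \<in> {0<..<beta}" | "x = 0" | "x = beta" | "x = L" | "x \<in> {beta<..<L}" | "x \<notin> {0..L}"
      using beta by force
    then show "indicator {0..L} x *\<^sub>R a x = a0 * indicator {0<..<beta} x + a 0 * indicator {0} x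
      + a beta * indicator {beta} x + a L * indicator {L} x"
      by cases (use a_in a_out beta in \<open>auto simp: indicator_def\<close>)
  qed
  then show "a \<in> borel_measurable (restrict_space lborel {0..L})"
    unfolding set_borel_measurable_iff_restrict_space[symmetric] set_borel_measurable_def by simp
  show "AE x in lborel. x \<in> {0..L} \<longrightarrow> 0 \<le> a x \<and> a x \<le> a0"
    using AE_lborel_singleton[of 0] AE_lborel_singleton[of beta] AE_lborel_singleton[of L]
  proof eventually_elim
    case (elim x)
    show ?case
    proof
      assume "x \<in> {0..L}"
      then have "x \<in> {0<..<beta} \<or> x \<in> {beta<..<L}" using elim by auto
      then show "0 \<le> a x \<and> a x \<le> a0" using a_in a_out a0 by auto
    qed
  qed
qed

locale timoshenko_resolvent_sequence =
  fixes rho1 rho2 k1 k2 k3 l L a0 :: real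
    and a :: "real \<Rightarrow> real"
    and lam :: "nat \<Rightarrow> real"
    and v1 v1x v1xx v2 v2x v3 v3x v3xx v4 v4x v5 v5x v5xx v6 v6x :: "nat \<Rightarrow> real \<Rightarrow> complex"
    and f1 f1x f2 f3 f3x f4 f5 f5x f6 :: "nat \<Rightarrow> real \<Rightarrow> complex"
  assumes pos: "rho1 > 0" "rho2 > 0" "k1 > 0" "k2 > 0" "k3 > 0" "L > 0"
    and a_measurable: "a \<in> borel_measurable (restrict_space lborel {0..L})"
    and a_bounds: "AE x in lborel. x \<in> {0..L} \<longrightarrow> 0 \<le> a x \<and> a x \<le> a0"
    and lam_to_infinity: "filterlim (\<lambda>n. \<bar>lam n\<bar>) at_top sequentially"
    and domain: "\<And>n. H2H10 L (v1 n) (v1x n) (v1xx n)" "\<And>n. H10 L (v2 n) (v2x n)"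
      "\<And>n. H2H10 L (v3 n) (v3x n) (v3xx n)" "\<And>n. H10 L (v4 n) (v4x n)"
      "\<And>n. H2H10 L (v5 n) (v5x n) (v5xx n)" "\<And>n. H10 L (v6 n) (v6x n)"
    and bounded: "\<And>n. Hnorm rho1 rho2 k1 k2 k3 l L (v1 n) (v1x n) (v2 n) (v3 n) (v3x n) (v4 n)
      (v5 n) (v5x n) (v6 n) \<le> 1"
    and f1_eq: "\<And>n x. f1 n x = \<i> * of_real (lam n) * v1 n x - v2 n x"
    and f1x_eq: "\<And>n x. f1x n x = \<i> * of_real (lam n) * v1x n x - v2x n x"
    and f2_eq: "\<And>n x. f2 n x = \<i> * of_real (lam n) * v2 n x
           - (of_real (k1 / rho1) * (v1xx n x + v3x n x + of_real l * v5x n x)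
              + of_real (l * k3 / rho1) * (v5x n x - of_real l * v1 n x))"
    and f3_eq: "\<And>n x. f3 n x = \<i> * of_real (lam n) * v3 n x - v4 n x"
    and f3x_eq: "\<And>n x. f3x n x = \<i> * of_real (lam n) * v3x n x - v4x n x"
    and f4_eq: "\<And>n x. f4 n x = \<i> * of_real (lam n) * v4 n x
           - (of_real (k2 / rho2) * v3xx n x
              - of_real (k1 / rho2) * (v1x n x + v3 n x + of_real l * v5 n x))"
    and f5_eq: "\<And>n x. f5 n x = \<i> * of_real (lam n) * v5 n x - v6 n x"
    and f5x_eq: "\<And>n x. f5x n x = \<i> * of_real (lam n) * v5x n x - v6x n x"
    and f6_eq: "\<And>n x. f6 n x = \<i> * of_real (lam n) * v6 n x
           - (of_real (k3 / rho1) * (v5xx n x - of_real l * v1x n x)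
              - of_real (l * k1 / rho1) * (v1x n x + v3 n x + of_real l * v5 n x)
              - of_real (a x / rho1) * v6 n x)"
    and resolvent_tendsto_0: "(\<lambda>n. Hnorm rho1 rho2 k1 k2 k3 l L (f1 n) (f1x n) (f2 n) (f3 n) (f3x n)
      (f4 n) (f5 n) (f5x n) (f6 n)) \<longlonglongrightarrow> 0"
begin

lemma state_wderiv:
  "is_wderiv L (v1 n) (v1x n)" "is_wderiv L (v1x n) (v1xx n)" "is_wderiv L (v2 n) (v2x n)"
  "is_wderiv L (v3 n) (v3x n)" "is_wderiv L (v3x n) (v3xx n)" "is_wderiv L (v4 n) (v4x n)"
  "is_wderiv L (v5 n) (v5x n)" "is_wderiv L (v5x n) (v5xx n)" "is_wderiv L (v6 n) (v6x n)"
  using domain[of n] by (auto simp: H2H10_def H10_def)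

lemma state_H10:
  "H10 L (v1 n) (v1x n)" "H10 L (v3 n) (v3x n)" "H10 L (v5 n) (v5x n)"
  using domain[of n] by (auto simp: H2H10_def)

lemma state_L2:
  "L2 L (v1 n)" "L2 L (v1x n)" "L2 L (v1xx n)" "L2 L (v2 n)" "L2 L (v2x n)"
  "L2 L (v3 n)" "L2 L (v3x n)" "L2 L (v3xx n)" "L2 L (v4 n)" "L2 L (v4x n)"
  "L2 L (v5 n)" "L2 L (v5x n)" "L2 L (v5xx n)" "L2 L (v6 n)" "L2 L (v6x n)"
  using state_wderiv[of n] by (auto intro: is_wderiv_L2 is_wderiv_L2_deriv)

lemma damped_velocity_L2: "L2 L (\<lambda>x. of_real (a x) * v6 n x)"
  by (rule L2_bounded_mult[OF state_L2(14), of _ a0])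
     (use a_measurable a_bounds in \<open>auto elim!: eventually_mono\<close>)

lemma resolvent_wderiv_H10:
  "H10 L (f1 n) (f1x n)" "H10 L (f3 n) (f3x n)" "H10 L (f5 n) (f5x n)"
proof -
  have H: "H10 L (v1 n) (v1x n)" "H10 L (v2 n) (v2x n)" "H10 L (v3 n) (v3x n)"
    "H10 L (v4 n) (v4x n)" "H10 L (v5 n) (v5x n)" "H10 L (v6 n) (v6x n)"
    using domain[of n] by (auto simp: H2H10_def)
  have "f1 n = (\<lambda>x. \<i> * of_real (lam n) * v1 n x - v2 n x)"
    "f1x n = (\<lambda>x. \<i> * of_real (lam n) * v1x n x - v2x n x)"
    "f3 n = (\<lambda>x. \<i> * of_real (lam n) * v3 n x - v4 n x)"
    "f3x n = (\<lambda>x. \<i> * of_real (lam n) * v3x n x - v4x n x)"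
    "f5 n = (\<lambda>x. \<i> * of_real (lam n) * v5 n x - v6 n x)"
    "f5x n = (\<lambda>x. \<i> * of_real (lam n) * v5x n x - v6x n x)"
    by (simp_all add: fun_eq_iff f1_eq f1x_eq f3_eq f3x_eq f5_eq f5x_eq)
  with H show "H10 L (f1 n) (f1x n)" "H10 L (f3 n) (f3x n)" "H10 L (f5 n) (f5x n)"
    unfolding H10_def by (auto intro!: is_wderiv_diff is_wderiv_cmult)
qed

lemma resolvent_L2:
  "L2 L (f1 n)" "L2 L (f1x n)" "L2 L (f2 n)" "L2 L (f3 n)" "L2 L (f3x n)" "L2 L (f4 n)"
  "L2 L (f5 n)" "L2 L (f5x n)" "L2 L (f6 n)"
proof -
  note Lv = state_L2[of n] damped_velocity_L2[of n]
  show "L2 L (f1 n)" "L2 L (f1x n)" "L2 L (f3 n)" "L2 L (f3x n)" "L2 L (f5 n)" "L2 L (f5x n)"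
    using resolvent_wderiv_H10[of n] unfolding H10_def by (auto intro: is_wderiv_L2 is_wderiv_L2_deriv)
  have "f2 n = (\<lambda>x. \<i> * of_real (lam n) * v2 n x
           - (of_real (k1 / rho1) * (v1xx n x + v3x n x + of_real l * v5x n x)
              + of_real (l * k3 / rho1) * (v5x n x - of_real l * v1 n x)))"
    "f4 n = (\<lambda>x. \<i> * of_real (lam n) * v4 n x
           - (of_real (k2 / rho2) * v3xx n x - of_real (k1 / rho2) * (v1x n x + v3 n x + of_real l * v5 n x)))"
    "f6 n = (\<lambda>x. \<i> * of_real (lam n) * v6 n x
           - (of_real (k3 / rho1) * (v5xx n x - of_real l * v1x n x)
              - of_real (l * k1 / rho1) * (v1x n x + v3 n x + of_real l * v5 n x)
              - of_real (1 / rho1) * (of_real (a x) * v6 n x)))"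
    by (simp_all add: fun_eq_iff f2_eq f4_eq f6_eq)
  then show "L2 L (f2 n)" "L2 L (f4 n)" "L2 L (f6 n)"
    by (simp_all only:) (intro L2_diff L2_add L2_cmult Lv)+
qed

definition state_energy :: "nat \<Rightarrow> real" where
  "state_energy n = Henergy rho1 rho2 k1 k2 k3 l L (v1 n) (v1x n) (v2 n) (v3 n) (v3x n) (v4 n)
     (v5 n) (v5x n) (v6 n)"

definition resolvent_energy :: "nat \<Rightarrow> real" where
  "resolvent_energy n = Henergy rho1 rho2 k1 k2 k3 l L (f1 n) (f1x n) (f2 n) (f3 n) (f3x n) (f4 n)
     (f5 n) (f5x n) (f6 n)"

lemma Henergy_nonneg: "0 \<le> Henergy rho1 rho2 k1 k2 k3 l L p1 p1x p2 p3 p3x p4 p5 p5x p6"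
  unfolding Henergy_def using pos by (intro add_nonneg_nonneg mult_nonneg_nonneg sqnorm_nonneg) auto

lemma state_energy_le_1: "state_energy n \<le> 1"
proof -
  have "sqrt (state_energy n) \<le> 1"
    using bounded[of n] state_L2[of n] unfolding state_energy_def by (simp add: Hnorm_eq_sqrt_Henergy)
  then show ?thesis by simp
qed

lemma resolvent_energy_tendsto_0: "resolvent_energy \<longlonglongrightarrow> 0"
proof -
  have "(\<lambda>n. sqrt (resolvent_energy n)) \<longlonglongrightarrow> 0"
    using resolvent_tendsto_0 by (simp add: resolvent_energy_def Hnorm_eq_sqrt_Henergy resolvent_L2)
  from tendsto_power[OF this, of 2] show ?thesis
    by (simp add: resolvent_energy_def[abs_def] Henergy_nonneg)
qed

lemma resolvent_components_le_energy:
  obtains C where "\<And>n q. q \<in> {f1 n, f1x n, f2 n, f3 n, f3x n, f4 n, f5 n, f5x n, f6 n,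
      \<lambda>x. f1x n x + f3 n x + of_real l * f5 n x,
      \<lambda>x. f5x n x - of_real l * f1 n x} \<Longrightarrow> sqnorm L q \<le> C * resolvent_energy n"
proof -
  obtain C where C: "\<And>p1 p1x p2 p3 p3x p4 p5 p5x p6 q. H10 L p1 p1x \<Longrightarrow> H10 L p3 p3x \<Longrightarrow> H10 L p5 p5x \<Longrightarrow>
    q \<in> {p1, p1x, p2, p3, p3x, p4, p5, p5x, p6,
      \<lambda>x. p1x x + p3 x + of_real l * p5 x, \<lambda>x. p5x x - of_real l * p1 x} \<Longrightarrow>
    sqnorm L q \<le> C * Henergy rho1 rho2 k1 k2 k3 l L p1 p1x p2 p3 p3x p4 p5 p5x p6"
    by (fact Henergy_coercive[OF pos, where l = l])
  show thesis
    by (rule that, unfold resolvent_energy_def, rule C[OF resolvent_wderiv_H10])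
qed

lemma state_components_le_energy:
  obtains C where "\<And>n q. q \<in> {v1 n, v1x n, v2 n, v3 n, v3x n, v4 n, v5 n, v5x n, v6 n,
      \<lambda>x. v1x n x + v3 n x + of_real l * v5 n x,
      \<lambda>x. v5x n x - of_real l * v1 n x} \<Longrightarrow> sqnorm L q \<le> C * state_energy n"
proof -
  obtain C where C: "\<And>p1 p1x p2 p3 p3x p4 p5 p5x p6 q. H10 L p1 p1x \<Longrightarrow> H10 L p3 p3x \<Longrightarrow> H10 L p5 p5x \<Longrightarrow>
    q \<in> {p1, p1x, p2, p3, p3x, p4, p5, p5x, p6,
      \<lambda>x. p1x x + p3 x + of_real l * p5 x, \<lambda>x. p5x x - of_real l * p1 x} \<Longrightarrow>
    sqnorm L q \<le> C * Henergy rho1 rho2 k1 k2 k3 l L p1 p1x p2 p3 p3x p4 p5 p5x p6"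
    by (fact Henergy_coercive[OF pos, where l = l])
  show thesis
    by (rule that, unfold state_energy_def, rule C[OF state_H10])
qed

lemma resolvent_components_tendsto_0:
  "(\<lambda>n. sqnorm L (f1 n)) \<longlonglongrightarrow> 0" "(\<lambda>n. sqnorm L (f1x n)) \<longlonglongrightarrow> 0" "(\<lambda>n. sqnorm L (f2 n)) \<longlonglongrightarrow> 0"
  "(\<lambda>n. sqnorm L (f3 n)) \<longlonglongrightarrow> 0" "(\<lambda>n. sqnorm L (f3x n)) \<longlonglongrightarrow> 0" "(\<lambda>n. sqnorm L (f4 n)) \<longlonglongrightarrow> 0"
  "(\<lambda>n. sqnorm L (f5 n)) \<longlonglongrightarrow> 0" "(\<lambda>n. sqnorm L (f5x n)) \<longlonglongrightarrow> 0" "(\<lambda>n. sqnorm L (f6 n)) \<longlonglongrightarrow> 0"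
  "(\<lambda>n. sqnorm L (\<lambda>x. f1x n x + f3 n x + of_real l * f5 n x)) \<longlonglongrightarrow> 0"
  "(\<lambda>n. sqnorm L (\<lambda>x. f5x n x - of_real l * f1 n x)) \<longlonglongrightarrow> 0"
proof -
  obtain C where C: "\<And>n q. q \<in> {f1 n, f1x n, f2 n, f3 n, f3x n, f4 n, f5 n, f5x n, f6 n,
      \<lambda>x. f1x n x + f3 n x + of_real l * f5 n x,
      \<lambda>x. f5x n x - of_real l * f1 n x} \<Longrightarrow> sqnorm L q \<le> C * resolvent_energy n"
    by (fact resolvent_components_le_energy)
  show "(\<lambda>n. sqnorm L (f1 n)) \<longlonglongrightarrow> 0" "(\<lambda>n. sqnorm L (f1x n)) \<longlonglongrightarrow> 0" "(\<lambda>n. sqnorm L (f2 n)) \<longlonglongrightarrow> 0"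
    "(\<lambda>n. sqnorm L (f3 n)) \<longlonglongrightarrow> 0" "(\<lambda>n. sqnorm L (f3x n)) \<longlonglongrightarrow> 0" "(\<lambda>n. sqnorm L (f4 n)) \<longlonglongrightarrow> 0"
    "(\<lambda>n. sqnorm L (f5 n)) \<longlonglongrightarrow> 0" "(\<lambda>n. sqnorm L (f5x n)) \<longlonglongrightarrow> 0" "(\<lambda>n. sqnorm L (f6 n)) \<longlonglongrightarrow> 0"
    "(\<lambda>n. sqnorm L (\<lambda>x. f1x n x + f3 n x + of_real l * f5 n x)) \<longlonglongrightarrow> 0"
    "(\<lambda>n. sqnorm L (\<lambda>x. f5x n x - of_real l * f1 n x)) \<longlonglongrightarrow> 0"
    by (rule tendsto_0_if_le_mult[OF sqnorm_nonneg _ resolvent_energy_tendsto_0, where C = C],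
        rule C, simp)+
qed

lemma state_components_bounded:
  "Bseq (\<lambda>n. sqnorm L (v1x n))" "Bseq (\<lambda>n. sqnorm L (v2 n))" "Bseq (\<lambda>n. sqnorm L (v3x n))"
  "Bseq (\<lambda>n. sqnorm L (v4 n))" "Bseq (\<lambda>n. sqnorm L (v5x n))" "Bseq (\<lambda>n. sqnorm L (v6 n))"
  "Bseq (\<lambda>n. sqnorm L (\<lambda>x. v1x n x + v3 n x + of_real l * v5 n x))"
  "Bseq (\<lambda>n. sqnorm L (\<lambda>x. v5x n x - of_real l * v1 n x))"
proof -
  obtain C where C: "\<And>n q. q \<in> {v1 n, v1x n, v2 n, v3 n, v3x n, v4 n, v5 n, v5x n, v6 n,
      \<lambda>x. v1x n x + v3 n x + of_real l * v5 n x,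
      \<lambda>x. v5x n x - of_real l * v1 n x} \<Longrightarrow> sqnorm L q \<le> C * state_energy n"
    by (fact state_components_le_energy)
  have CE: "C * state_energy n \<le> \<bar>C\<bar>" for n
  proof -
    have "C * state_energy n \<le> \<bar>C\<bar> * state_energy n"
      using Henergy_nonneg by (intro mult_right_mono) (auto simp: state_energy_def)
    also have "\<dots> \<le> \<bar>C\<bar>" using state_energy_le_1[of n] by (simp add: mult_left_le)
    finally show ?thesis .
  qed
  have bound: "\<And>n q. q \<in> {v1 n, v1x n, v2 n, v3 n, v3x n, v4 n, v5 n, v5x n, v6 n,
      \<lambda>x. v1x n x + v3 n x + of_real l * v5 n x,
      \<lambda>x. v5x n x - of_real l * v1 n x} \<Longrightarrow> sqnorm L q \<le> \<bar>C\<bar>"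
    using C CE by (meson order_trans)
  show "Bseq (\<lambda>n. sqnorm L (v1x n))" "Bseq (\<lambda>n. sqnorm L (v2 n))" "Bseq (\<lambda>n. sqnorm L (v3x n))"
    "Bseq (\<lambda>n. sqnorm L (v4 n))" "Bseq (\<lambda>n. sqnorm L (v5x n))" "Bseq (\<lambda>n. sqnorm L (v6 n))"
    "Bseq (\<lambda>n. sqnorm L (\<lambda>x. v1x n x + v3 n x + of_real l * v5 n x))"
    "Bseq (\<lambda>n. sqnorm L (\<lambda>x. v5x n x - of_real l * v1 n x))"
    by (rule BseqI'[where K="\<bar>C\<bar>"], simp add: sqnorm_nonneg, rule bound, blast)+
qed

lemma displacements_tendsto_0:
  "(\<lambda>n. sqnorm L (v1 n)) \<longlonglongrightarrow> 0" "(\<lambda>n. sqnorm L (v3 n)) \<longlonglongrightarrow> 0" "(\<lambda>n. sqnorm L (v5 n)) \<longlonglongrightarrow> 0"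
  by (rule displacement_tendsto_0[OF lam_to_infinity f1_eq state_L2(4) state_components_bounded(2)
        resolvent_L2(1) resolvent_components_tendsto_0(1)],
      rule displacement_tendsto_0[OF lam_to_infinity f3_eq state_L2(9) state_components_bounded(4)
        resolvent_L2(4) resolvent_components_tendsto_0(4)],
      rule displacement_tendsto_0[OF lam_to_infinity f5_eq state_L2(14) state_components_bounded(6)
        resolvent_L2(7) resolvent_components_tendsto_0(7)])

lemma rho_nonzero: "rho1 \<noteq> 0" "rho2 \<noteq> 0"
  using pos by simp_all

lemmas dissipation_identity = dissipation_identity[OF rho_nonzero f1_eq[of n x] f1x_eq[of n x]
    f2_eq[of n x] f3_eq[of n x] f3x_eq[of n x] f4_eq[of n x] f5_eq[of n x] f5x_eq[of n x] f6_eq[of n x]]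
  for n x
lemmas energy_multiplier_identity = energy_multiplier_identity[OF rho_nonzero f1_eq[of n x] f1x_eq[of n x]
    f2_eq[of n x] f3_eq[of n x] f3x_eq[of n x] f4_eq[of n x] f5_eq[of n x] f5x_eq[of n x] f6_eq[of n x],
    where h = "h x" and h' = "h' x"] for h h' :: "real \<Rightarrow> real" and n x

lemma dissipation_tendsto_0: "(\<lambda>n. LINT x:{0..L}|lborel. a x * (cmod (v6 n x))\<^sup>2) \<longlonglongrightarrow> 0"
proof -
  have "is_wderiv L (\<lambda>x. v1x n x + v3 n x + of_real l * v5 n x) (\<lambda>x. v1xx n x + v3x n x + of_real l * v5x n x)"
    "is_wderiv L (\<lambda>x. v5x n x - of_real l * v1 n x) (\<lambda>x. v5xx n x - of_real l * v1x n x)" for n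
    using state_wderiv by (intro is_wderiv_add is_wderiv_diff is_wderiv_cmult; fast)+
  then show ?thesis
    using domain pos unfolding dissipation_identity
    by (intro null_integrals_tendsto_0 null_integrals_H10_integration_by_parts null_integrals_add
        null_integrals_mult_left null_integrals_Re null_integrals_weighted_inner continuous_on_const
        L2_add L2_diff L2_cmult state_L2 resolvent_L2
        resolvent_components_tendsto_0 state_components_bounded state_wderiv)
       (auto simp: H2H10_def)
qed

lemma damped_velocity_tendsto_0: "(\<lambda>n. sqnorm L (\<lambda>x. of_real (a x) * v6 n x)) \<longlonglongrightarrow> 0"
proof (rule tendsto_0_if_le_mult[OF sqnorm_nonneg _ dissipation_tendsto_0])
  fix n
  have "AE x in lborel. x \<in> {0..L} \<longrightarrow> (cmod (of_real (a x) * v6 n x))\<^sup>2 \<le> a0 * (a x * (cmod (v6 n x))\<^sup>2)"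
    using a_bounds
  proof eventually_elim
    case (elim x)
    show ?case
    proof
      assume "x \<in> {0..L}"
      then have "0 \<le> a x" "a x \<le> a0" using elim by auto
      then have "a x * (a x * (cmod (v6 n x))\<^sup>2) \<le> a0 * (a x * (cmod (v6 n x))\<^sup>2)"
        by (intro mult_right_mono) auto
      then show "(cmod (of_real (a x) * v6 n x))\<^sup>2 \<le> a0 * (a x * (cmod (v6 n x))\<^sup>2)"
        using \<open>0 \<le> a x\<close> by (simp add: norm_mult power_mult_distrib power2_eq_square mult_ac)
    qed
  qed
  moreover have "set_integrable lborel {0..L} (\<lambda>x. a x * (cmod (v6 n x))\<^sup>2)"
    using set_integrable_Re[OF L2_integrable_mult[OF damped_velocity_L2 L2_cnj[OF state_L2(14)]]]
    by (simp add: cmod_mult_self power2_eq_square mult.assoc)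
  ultimately show "sqnorm L (\<lambda>x. of_real (a x) * v6 n x) \<le> a0 * (LINT x:{0..L}|lborel. a x * (cmod (v6 n x))\<^sup>2)"
    unfolding sqnorm_def
    by (subst set_integral_mult_right[symmetric])
       (intro set_integral_mono_AE L2_integrable_square damped_velocity_L2 set_integrable_mult_right)
qed

lemma multiplier_integral_tendsto_0:
  fixes h h' :: "real \<Rightarrow> real"
  assumes hd: "\<forall>x\<in>{0..L}. (h has_real_derivative h' x) (at x within {0..L})"
    and hc: "continuous_on {0..L} h'" and h0: "h 0 = 0" and hL: "h L = 0"
  shows "(\<lambda>n. LINT x:{0..L}|lborel. h' x *
      (rho1 * (cmod (of_real (lam n) * v1 n x))\<^sup>2 + k1 * (cmod (v1x n x))\<^sup>2
     + rho2 * (cmod (of_real (lam n) * v3 n x))\<^sup>2 + k2 * (cmod (v3x n x))\<^sup>2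
     + rho1 * (cmod (of_real (lam n) * v5 n x))\<^sup>2 + k3 * (cmod (v5x n x))\<^sup>2)) \<longlonglongrightarrow> 0"
proof -
  have L0: "0 \<le> L" using pos by simp
  have ch: "continuous_on {0..L} h" using hd by (intro DERIV_continuous_on) blast
  have bounded_sums: "Bseq (\<lambda>n. sqnorm L (\<lambda>x. 2 * v2 n x + f1 n x))"
    "Bseq (\<lambda>n. sqnorm L (\<lambda>x. 2 * v4 n x + f3 n x))" "Bseq (\<lambda>n. sqnorm L (\<lambda>x. 2 * v6 n x + f5 n x))"
    by (intro Bseq_sqnorm_add state_L2 resolvent_L2 state_components_bounded
        Bseq_of_tendsto_0[OF resolvent_components_tendsto_0(1)]
        Bseq_of_tendsto_0[OF resolvent_components_tendsto_0(4)]
        Bseq_of_tendsto_0[OF resolvent_components_tendsto_0(7)])+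
  show ?thesis
    unfolding energy_multiplier_identity[where h = h and h' = h']
    by (intro null_integrals_tendsto_0 null_integrals_multiplier_energy[OF hd hc h0 hL L0]
        null_integrals_add null_integrals_mult_left null_integrals_Re null_integrals_weighted_inner
        continuous_intros ch hc state_wderiv state_L2 resolvent_L2 damped_velocity_L2 L2_add L2_cmult
        bounded_sums state_components_bounded resolvent_components_tendsto_0 displacements_tendsto_0
        damped_velocity_tendsto_0)
qed

end

theorem mainTheorem13:
  fixes rho1 rho2 k1 k2 k3 l L beta a0 :: real
    and a :: "real \<Rightarrow> real"
    and ell :: nat
    and lam :: "nat \<Rightarrow> real"
    and v1 v2 v3 v4 v5 v6 :: "nat \<Rightarrow> real \<Rightarrow> complex"
    and v1x v2x v3x v4x v5x v6x v1xx v3xx v5xx :: "nat \<Rightarrow> real \<Rightarrow> complex"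
  assumes pos: "rho1 > 0" "rho2 > 0" "k1 > 0" "k2 > 0" "k3 > 0" "l > 0" "L > 0"
    and beta: "0 < beta" "beta < L"
    and a0: "a0 > 0"
    and a_in: "\<forall>x\<in>{0<..<beta}. a x = a0"
    and a_out: "\<forall>x\<in>{beta<..<L}. a x = 0"
    and hyp: "(k1 / rho1 = k2 / rho2 \<and> k1 = k3 \<and> ell = 0)
            \<or> (k1 / rho1 = k2 / rho2 \<and> k1 \<noteq> k3 \<and> ell = 2)
            \<or> (k1 / rho1 \<noteq> k2 / rho2 \<and> ell = 4)"
    and lam_nz: "\<forall>n. lam n \<noteq> 0"
    and lam_inf: "filterlim (\<lambda>n. \<bar>lam n\<bar>) at_top sequentially"
    and dom: "\<forall>n. H2H10 L (v1 n) (v1x n) (v1xx n) \<and> H10 L (v2 n) (v2x n)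
                 \<and> H2H10 L (v3 n) (v3x n) (v3xx n) \<and> H10 L (v4 n) (v4x n)
                 \<and> H2H10 L (v5 n) (v5x n) (v5xx n) \<and> H10 L (v6 n) (v6x n)"
    and unit: "\<forall>n. Hnorm rho1 rho2 k1 k2 k3 l L (v1 n) (v1x n) (v2 n) (v3 n) (v3x n) (v4 n)
                   (v5 n) (v5x n) (v6 n) = 1"
    and F_lim: "(\<lambda>n. Hnorm rho1 rho2 k1 k2 k3 l L
       (\<lambda>x. of_real (lam n ^ ell) * (\<i> * of_real (lam n) * v1 n x - v2 n x))
       (\<lambda>x. of_real (lam n ^ ell) * (\<i> * of_real (lam n) * v1x n x - v2x n x))
       (\<lambda>x. of_real (lam n ^ ell) * (\<i> * of_real (lam n) * v2 n x
           - (of_real (k1 / rho1) * (v1xx n x + v3x n x + of_real l * v5x n x)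
              + of_real (l * k3 / rho1) * (v5x n x - of_real l * v1 n x))))
       (\<lambda>x. of_real (lam n ^ ell) * (\<i> * of_real (lam n) * v3 n x - v4 n x))
       (\<lambda>x. of_real (lam n ^ ell) * (\<i> * of_real (lam n) * v3x n x - v4x n x))
       (\<lambda>x. of_real (lam n ^ ell) * (\<i> * of_real (lam n) * v4 n x
           - (of_real (k2 / rho2) * v3xx n x
              - of_real (k1 / rho2) * (v1x n x + v3 n x + of_real l * v5 n x))))
       (\<lambda>x. of_real (lam n ^ ell) * (\<i> * of_real (lam n) * v5 n x - v6 n x))
       (\<lambda>x. of_real (lam n ^ ell) * (\<i> * of_real (lam n) * v5x n x - v6x n x))
       (\<lambda>x. of_real (lam n ^ ell) * (\<i> * of_real (lam n) * v6 n x
           - (of_real (k3 / rho1) * (v5xx n x - of_real l * v1x n x)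
              - of_real (l * k1 / rho1) * (v1x n x + v3 n x + of_real l * v5 n x)
              - of_real (a x / rho1) * v6 n x))))
       \<longlonglongrightarrow> 0"
  shows "\<forall>h h' :: real \<Rightarrow> real.
           (\<forall>x\<in>{0..L}. (h has_real_derivative h' x) (at x within {0..L}))
           \<and> continuous_on {0..L} h' \<and> h 0 = 0 \<and> h L = 0
         \<longrightarrow> (\<lambda>n. LINT x:{0..L}|lborel. h' x *
               (rho1 * (cmod (of_real (lam n) * v1 n x))\<^sup>2 + k1 * (cmod (v1x n x))\<^sup>2
              + rho2 * (cmod (of_real (lam n) * v3 n x))\<^sup>2 + k2 * (cmod (v3x n x))\<^sup>2
              + rho1 * (cmod (of_real (lam n) * v5 n x))\<^sup>2 + k3 * (cmod (v5x n x))\<^sup>2))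
             \<longlonglongrightarrow> 0"
proof -
  interpret timoshenko_resolvent_sequence rho1 rho2 k1 k2 k3 l L a0 a lam
    v1 v1x v1xx v2 v2x v3 v3x v3xx v4 v4x v5 v5x v5xx v6 v6x
    "\<lambda>n x. \<i> * of_real (lam n) * v1 n x - v2 n x" "\<lambda>n x. \<i> * of_real (lam n) * v1x n x - v2x n x"
    "\<lambda>n x. \<i> * of_real (lam n) * v2 n x
       - (of_real (k1 / rho1) * (v1xx n x + v3x n x + of_real l * v5x n x)
          + of_real (l * k3 / rho1) * (v5x n x - of_real l * v1 n x))"
    "\<lambda>n x. \<i> * of_real (lam n) * v3 n x - v4 n x" "\<lambda>n x. \<i> * of_real (lam n) * v3x n x - v4x n x"
    "\<lambda>n x. \<i> * of_real (lam n) * v4 n x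
       - (of_real (k2 / rho2) * v3xx n x - of_real (k1 / rho2) * (v1x n x + v3 n x + of_real l * v5 n x))"
    "\<lambda>n x. \<i> * of_real (lam n) * v5 n x - v6 n x" "\<lambda>n x. \<i> * of_real (lam n) * v5x n x - v6x n x"
    "\<lambda>n x. \<i> * of_real (lam n) * v6 n x
       - (of_real (k3 / rho1) * (v5xx n x - of_real l * v1x n x)
          - of_real (l * k1 / rho1) * (v1x n x + v3 n x + of_real l * v5 n x)
          - of_real (a x / rho1) * v6 n x)"
    using pos dom unit lam_inf damping_coefficient[OF beta a_in a_out a0]
      Hnorm_tendsto_0_unscaled[OF lam_inf F_lim]
    by unfold_locales auto
  show ?thesis
    by (intro allI impI, elim conjE, rule multiplier_integral_tendsto_0)
qed

end
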